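(* Let $H$ be a separable complex Hilbert space and $X$ a locally compact space with positive Borel measure $\mu$. Then $$F=\operatorname{GL}^+(H)\,U(H)\,\overline{F}_0=\operatorname{GL}(H)\,\overline{F}_0=\operatorname{GL}^+(H)\,F_0,$$ and for each $f\in F$ the factorization of $f$ in $\operatorname{GL}^+(H)U(H)\overline{F}_0$ as $$f=S(f)^{1/2}\,U(T(f))\,\sigma(T(f))$$ is unique, where $T(f)=S(f)^{-1/2}f$.
   Context: A frame on $H$ is a map $f:X\to H$ such that $x\mapsto\langle\phi,f(x)\rangle$ is measurable for every $\phi\in H$ and there exist $0<A\le B$ with $A\|\phi\|^2\le\int_X|\langle\phi,f(x)\rangle|^2d\mu(x)\le B\|\phi\|^2$ for all $\phi$; it is Parseval if $A=B=1$. Its frame operator is $S(f)\phi=\int_X\langle\phi,f(x)\rangle f(x)\,d\mu(x)$. $\operatorname{GL}(H)$ is the group of bounded invertible operators with bounded inverse, $\operatorname{GL}^+(H)$ its positive elements, $U(H)$ the unitary group. $F$ is the set of frames $f$ with $\sup_x\|f(x)\|_H<\infty$, $F_0$ the Parseval ones; $(Af)(x)=A[f(x)]$, and products such as $\operatorname{GL}(H)\overline{F}_0$ denote sets $\{Af\}$. $\overline{F}_0\subset F_0$ is a fixed transversal of $F_0/U(H)$ (exactly one element from each orbit $\{Vf:V\in U(H)\}$); each $f\in F_0$ factors uniquely as $f=U(f)\sigma(f)$ with $U(f)\in U(H)$, $\sigma(f)\in\overline{F}_0$. *)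

theory Defs
  imports "HOL-Analysis.Analysis"
begin

class complex_vector = real_vector +
  fixes scaleC :: "complex \<Rightarrow> 'a \<Rightarrow> 'a"  (infixr \<open>*\<^sub>C\<close> 75)
  assumes scaleC_of_real: "scaleC (of_real r) x = scaleR r x"
    and scaleC_add_right: "scaleC a (x + y) = scaleC a x + scaleC a y"
    and scaleC_add_left: "scaleC (a + b) x = scaleC a x + scaleC b x"
    and scaleC_scaleC: "scaleC a (scaleC b x) = scaleC (a * b) x"
    and scaleC_one: "scaleC 1 x = x"

text \<open>Separability of the (metric)
  Hilbert space is expressed by the class second_countable_topology.\<close>

class chilbert_space = complex_vector + banach +
  fixes cinner :: "'a \<Rightarrow> 'a \<Rightarrow> complex"
  assumes cinner_commute: "cinner x y = cnj (cinner y x)"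
    and cinner_add_left: "cinner (x + y) z = cinner x z + cinner y z"
    and cinner_scaleC_left: "cinner (scaleC a x) y = a * cinner x y"
    and cinner_self_real: "Im (cinner x x) = 0"
    and norm_eq_sqrt_cinner: "norm x = sqrt (Re (cinner x x))"

definition bounded_clinear_op :: "('h::chilbert_space \<Rightarrow> 'h) \<Rightarrow> bool" where
  "bounded_clinear_op A \<longleftrightarrow>
     (\<forall>x y. A (x + y) = A x + A y) \<and> (\<forall>c x. A (c *\<^sub>C x) = c *\<^sub>C A x) \<and>
     (\<exists>K. \<forall>x. norm (A x) \<le> K * norm x)"

definition GL :: "('h::chilbert_space \<Rightarrow> 'h) set" where
  "GL = {A. bounded_clinear_op A \<and> bij A \<and> bounded_clinear_op (inv A)}"

definition positive_op :: "('h::chilbert_space \<Rightarrow> 'h) \<Rightarrow> bool" where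
  "positive_op A \<longleftrightarrow> bounded_clinear_op A \<and>
     (\<forall>x. Im (cinner (A x) x) = 0 \<and> Re (cinner (A x) x) \<ge> 0)"

definition GL_pos :: "('h::chilbert_space \<Rightarrow> 'h) set" where
  "GL_pos = {A \<in> GL. positive_op A}"

definition unitary_group :: "('h::chilbert_space \<Rightarrow> 'h) set" where
  "unitary_group = {U. bounded_clinear_op U \<and> surj U \<and> (\<forall>x y. cinner (U x) (U y) = cinner x y)}"

definition op_sqrt :: "('h::chilbert_space \<Rightarrow> 'h) \<Rightarrow> ('h \<Rightarrow> 'h)" where
  "op_sqrt S = (THE R. positive_op R \<and> R \<circ> R = S)"

definition op_inv_sqrt :: "('h::chilbert_space \<Rightarrow> 'h) \<Rightarrow> ('h \<Rightarrow> 'h)" where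
  "op_inv_sqrt S = inv (op_sqrt S)"

definition weakly_measurable :: "'x measure \<Rightarrow> ('x \<Rightarrow> 'h::chilbert_space) \<Rightarrow> bool" where
  "weakly_measurable \<mu> f \<longleftrightarrow> (\<forall>\<phi>. (\<lambda>x. cinner \<phi> (f x)) \<in> borel_measurable \<mu>)"

definition frame :: "'x measure \<Rightarrow> ('x \<Rightarrow> 'h::chilbert_space) \<Rightarrow> bool" where
  "frame \<mu> f \<longleftrightarrow> weakly_measurable \<mu> f \<and>
     (\<exists>A B. 0 < A \<and> A \<le> B \<and>
        (\<forall>\<phi>. ennreal (A * (norm \<phi>)\<^sup>2) \<le> (\<integral>\<^sup>+ x. ennreal ((cmod (cinner \<phi> (f x)))\<^sup>2) \<partial>\<mu>) \<and>
              (\<integral>\<^sup>+ x. ennreal ((cmod (cinner \<phi> (f x)))\<^sup>2) \<partial>\<mu>) \<le> ennreal (B * (norm \<phi>)\<^sup>2)))"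

definition parseval_frame :: "'x measure \<Rightarrow> ('x \<Rightarrow> 'h::chilbert_space) \<Rightarrow> bool" where
  "parseval_frame \<mu> f \<longleftrightarrow> weakly_measurable \<mu> f \<and>
     (\<forall>\<phi>. (\<integral>\<^sup>+ x. ennreal ((cmod (cinner \<phi> (f x)))\<^sup>2) \<partial>\<mu>) = ennreal ((norm \<phi>)\<^sup>2))"

definition bframes :: "'x measure \<Rightarrow> ('x \<Rightarrow> 'h::chilbert_space) set" where
  "bframes \<mu> = {f. frame \<mu> f \<and> (\<exists>C. \<forall>x. norm (f x) \<le> C)}"

definition bparseval_frames :: "'x measure \<Rightarrow> ('x \<Rightarrow> 'h::chilbert_space) set" where
  "bparseval_frames \<mu> = {f. parseval_frame \<mu> f \<and> (\<exists>C. \<forall>x. norm (f x) \<le> C)}"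

definition frame_op :: "'x measure \<Rightarrow> ('x \<Rightarrow> 'h::chilbert_space) \<Rightarrow> ('h \<Rightarrow> 'h)" where
  "frame_op \<mu> f = (THE S. bounded_clinear_op S \<and>
     (\<forall>\<phi> \<psi>. cinner (S \<phi>) \<psi> = (LINT x|\<mu>. cinner \<phi> (f x) * cinner (f x) \<psi>)))"

definition frame_T :: "'x measure \<Rightarrow> ('x \<Rightarrow> 'h::chilbert_space) \<Rightarrow> ('x \<Rightarrow> 'h)" where
  "frame_T \<mu> f = (\<lambda>x. op_inv_sqrt (frame_op \<mu> f) (f x))"

definition transversal :: "'x measure \<Rightarrow> ('x \<Rightarrow> 'h::chilbert_space) set \<Rightarrow> bool" where
  "transversal \<mu> Fb \<longleftrightarrow> Fb \<subseteq> bparseval_frames \<mu> \<and>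
     (\<forall>f \<in> bparseval_frames \<mu>. \<exists>!g. g \<in> Fb \<and> (\<exists>V \<in> unitary_group. f = V \<circ> g))"

definition sigma_tr :: "('x \<Rightarrow> 'h::chilbert_space) set \<Rightarrow> ('x \<Rightarrow> 'h) \<Rightarrow> ('x \<Rightarrow> 'h)" where
  "sigma_tr Fb f = (THE g. g \<in> Fb \<and> (\<exists>V \<in> unitary_group. f = V \<circ> g))"

definition U_tr :: "('x \<Rightarrow> 'h::chilbert_space) set \<Rightarrow> ('x \<Rightarrow> 'h) \<Rightarrow> ('h \<Rightarrow> 'h)" where
  "U_tr Fb f = (THE V. V \<in> unitary_group \<and> f = V \<circ> sigma_tr Fb f)"

end

theory Submission
  imports Defs
begin

(*
  The frame operator S of a bounded frame f is positive and coercive (the lower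
  frame bound), so it has a positive invertible square root, obtained from the binomial series
  of \<surd>(1 - t) evaluated at the strict contraction I - S/c.  Then T f = S^(-1/2) f is a
  Parseval frame, since its frame integral at \<phi> is \<langle>S S^(-1/2) \<phi>, S^(-1/2) \<phi>\<rangle> = \<parallel>\<phi>\<parallel>\<^sup>2.  Conversely,
  A g is a bounded frame with frame operator A A* for every A \<in> GL(H) and bounded Parseval g.
  For uniqueness, if f = A V g with A positive invertible, the frame operator of f is A\<^sup>2, so
  A = S^(1/2) by uniqueness of positive square roots; hence V g = T f, whose factorization through
  the transversal is unique because a unitary is determined by its action on a Parseval frame.
*)

lemma scaleC_zero_right [simp]: "c *\<^sub>C (0::'a::complex_vector) = 0"
  using scaleC_add_right[of c 0 0] by simp

lemma scaleC_minus_right: "c *\<^sub>C (- (x::'a::complex_vector)) = - (c *\<^sub>C x)"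
  using scaleC_add_right[of c "- x" x] by (simp add: eq_neg_iff_add_eq_0)

lemma scaleC_diff_right: "c *\<^sub>C ((x::'a::complex_vector) - y) = c *\<^sub>C x - c *\<^sub>C y"
  unfolding diff_conv_add_uminus scaleC_add_right scaleC_minus_right ..

lemma scaleR_scaleC_commute: "r *\<^sub>R (c *\<^sub>C (v::'a::complex_vector)) = c *\<^sub>C (r *\<^sub>R v)"
  by (simp add: scaleC_of_real[symmetric] scaleC_scaleC mult.commute)

declare scaleC_one [simp]

lemma nonneg_quadratic_imp_bound:
  fixes a q e :: real
  assumes "\<And>t. 0 \<le> a - 2*t*q + (t*t)*q*e" "q \<ge> 0" "e \<ge> 0"
  shows "q \<le> a * e"
proof (cases "e = 0")
  case True
  show ?thesis
  proof (rule ccontr)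
    assume "\<not> ?thesis"
    hence "q > 0" using True by simp
    hence "2*((a+1)/(2*q))*q = a + 1" by simp
    thus False using assms(1)[of "(a+1)/(2*q)"] True by simp
  qed
next
  case False
  hence e: "e > 0" using assms by simp
  have "0 \<le> a - 2*(1/e)*q + ((1/e)*(1/e))*q*e" by (rule assms(1))
  also have "((1/e)*(1/e))*q*e = q/e" using e by (simp add: power2_eq_square)
  finally have "q / e \<le> a" by simp
  thus ?thesis using e by (simp add: pos_divide_le_eq)
qed

locale hermitian_form =
  fixes B :: "'a::complex_vector \<Rightarrow> 'a \<Rightarrow> complex"
  assumes add_left: "B (x + y) z = B x z + B y z"
    and scaleC_left: "B (c *\<^sub>C x) z = c * B x z"
    and hermitian: "B x y = cnj (B y x)"
begin

lemma add_right: "B z (x + y) = B z x + B z y"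
  by (subst (1 2 3) hermitian) (simp add: add_left)

lemma scaleC_right: "B z (c *\<^sub>C x) = cnj c * B z x"
  by (subst (1 2) hermitian) (simp add: scaleC_left)

lemma zero_left [simp]: "B 0 z = 0"
  using add_left[of 0 0 z] by simp

lemma zero_right [simp]: "B z 0 = 0"
  using add_right[of z 0 0] by simp

lemma minus_left: "B (- x) z = - B x z"
  using add_left[of "- x" x z] by (simp add: eq_neg_iff_add_eq_0)

lemma minus_right: "B z (- x) = - B z x"
  using add_right[of z "- x" x] by (simp add: eq_neg_iff_add_eq_0)

lemma diff_left: "B (x - y) z = B x z - B y z"
  unfolding diff_conv_add_uminus add_left minus_left ..

lemma diff_right: "B z (x - y) = B z x - B z y"
  unfolding diff_conv_add_uminus add_right minus_right ..

lemma diagonal_real: "B x x = of_real (Re (B x x))"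
  using hermitian[of x x] by (simp add: complex_eq_iff)

lemma Cauchy_Schwarz:
  assumes nonneg: "\<And>x. Re (B x x) \<ge> 0"
  shows "(cmod (B x y))\<^sup>2 \<le> Re (B x x) * Re (B y y)"
proof -
  define b where "b = B x y"
  have key: "0 \<le> Re (B x x) - 2*t*(cmod b)\<^sup>2 + (t*t)*(cmod b)\<^sup>2*Re (B y y)" for t :: real
  proof -
    define m where "m = complex_of_real t * b"
    have nb: "cnj b * b = (complex_of_real (cmod b))\<^sup>2" "b * cnj b = (complex_of_real (cmod b))\<^sup>2"
      using complex_norm_square[of b] by (simp_all add: mult.commute)
    have e1: "cnj m * b = complex_of_real t * (complex_of_real (cmod b))\<^sup>2"
      and e2: "m * cnj b = complex_of_real t * (complex_of_real (cmod b))\<^sup>2"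
      unfolding m_def by (simp_all add: mult.assoc nb)
    have "m * cnj m = complex_of_real t * complex_of_real t * (b * cnj b)"
      unfolding m_def by (simp add: ac_simps)
    hence e3: "m * cnj m = complex_of_real t * complex_of_real t * (complex_of_real (cmod b))\<^sup>2"
      by (simp only: nb)
    have "B (x - m *\<^sub>C y) (x - m *\<^sub>C y) = B x x - cnj m * b - m * cnj b + (m * cnj m) * B y y"
      unfolding diff_left diff_right scaleC_left scaleC_right hermitian[of y x] b_def[symmetric]
      by (simp add: algebra_simps)
    then have "Re (B (x - m *\<^sub>C y) (x - m *\<^sub>C y))
        = Re (B x x) - t * (cmod b)\<^sup>2 - t * (cmod b)\<^sup>2 + (t*t) * (cmod b)\<^sup>2 * Re (B y y)"
      by (subst (asm) diagonal_real[of y]) (simp add: e1 e2 e3)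
    with nonneg[of "x - m *\<^sub>C y"] show ?thesis by simp
  qed
  from nonneg_quadratic_imp_bound[OF key _ nonneg] show ?thesis unfolding b_def by simp
qed

end

lemma sesquilinear_eq_zero_if_diagonal_zero:
  fixes D :: "'a::complex_vector \<Rightarrow> 'a \<Rightarrow> complex"
  assumes add_left: "\<And>x y z. D (x + y) z = D x z + D y z"
    and scaleC_left: "\<And>c x z. D (c *\<^sub>C x) z = c * D x z"
    and add_right: "\<And>x y z. D z (x + y) = D z x + D z y"
    and scaleC_right: "\<And>c x z. D z (c *\<^sub>C x) = cnj c * D z x"
    and diagonal: "\<And>x. D x x = 0"
  shows "D x y = 0"
proof -
  have "D (x + y) (x + y) = D x x + D x y + (D y x + D y y)" by (simp add: add_left add_right)
  hence 1: "D x y + D y x = 0" using diagonal[of "x + y"] diagonal[of x] diagonal[of y] by simp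
  have "D (x + \<i> *\<^sub>C y) (x + \<i> *\<^sub>C y) = D x x + (- \<i>) * D x y + (\<i> * D y x + \<i> * (- \<i>) * D y y)"
    by (simp add: add_left add_right scaleC_left scaleC_right algebra_simps)
  hence 2: "(- \<i>) * D x y + \<i> * D y x = 0"
    using diagonal[of "x + \<i> *\<^sub>C y"] diagonal[of x] diagonal[of y] by simp
  from 1 2 have "\<i> * D y x = \<i> * D x y" by (simp add: algebra_simps)
  with 1 show ?thesis by simp
qed

interpretation cinner: hermitian_form "cinner :: 'a::chilbert_space \<Rightarrow> 'a \<Rightarrow> complex"
  by unfold_locales (auto simp: cinner_add_left cinner_scaleC_left intro: cinner_commute)

lemmas cinner_simps = cinner.diff_left cinner.diff_right cinner.minus_left cinner.minus_right
  cinner.zero_left cinner.zero_right cinner_add_left cinner.add_right cinner_scaleC_left cinner.scaleC_right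

lemma Re_cinner_self: "Re (cinner x x) = (norm (x::'a::chilbert_space))\<^sup>2"
proof -
  have "Re (cinner x x) \<ge> 0"
    using norm_eq_sqrt_cinner[of x] norm_ge_zero[of x] by (metis not_le real_sqrt_lt_0_iff)
  thus ?thesis using norm_eq_sqrt_cinner[of x] by simp
qed

lemma cinner_self: "cinner x x = complex_of_real ((norm (x::'a::chilbert_space))\<^sup>2)"
  using cinner.diagonal_real[of x] by (simp add: Re_cinner_self)

lemma Cauchy_Schwarz: "cmod (cinner x y) \<le> norm (x::'a::chilbert_space) * norm y"
proof -
  have "(cmod (cinner x y))\<^sup>2 \<le> (norm x * norm y)\<^sup>2"
    using cinner.Cauchy_Schwarz[of x y] by (simp add: Re_cinner_self power_mult_distrib)
  thus ?thesis by (simp add: power2_le_iff_abs_le)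
qed

lemma Re_cinner_le: "Re (cinner x y) \<le> norm (x::'a::chilbert_space) * norm y"
  using complex_Re_le_cmod Cauchy_Schwarz order_trans by blast

lemma cinner_eqI: assumes "\<And>z. cinner x z = cinner (y::'a::chilbert_space) z" shows "x = y"
proof -
  have "cinner (x - y) (x - y) = 0" using assms by (simp add: cinner.diff_left)
  thus ?thesis by (simp add: cinner_self)
qed

lemma cinner_eqI_right: assumes "\<And>z. cinner z x = cinner z (y::'a::chilbert_space)" shows "x = y"
  by (rule cinner_eqI) (subst (1 2) cinner_commute, simp add: assms)

lemma norm_scaleC: "norm (c *\<^sub>C (x::'a::chilbert_space)) = cmod c * norm x"
proof -
  have "cinner (c *\<^sub>C x) (c *\<^sub>C x) = (c * cnj c) * cinner x x"
    by (simp add: cinner_simps mult.assoc)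
  hence "Re (cinner (c *\<^sub>C x) (c *\<^sub>C x)) = (cmod c)\<^sup>2 * Re (cinner x x)"
    by (simp add: complex_norm_square[symmetric] del: of_real_power)
  hence "(norm (c *\<^sub>C x))\<^sup>2 = (cmod c * norm x)\<^sup>2"
    by (simp add: Re_cinner_self power_mult_distrib)
  thus ?thesis by (simp add: power2_eq_iff_nonneg)
qed

lemma bounded_linear_cinner_left: "bounded_linear (\<lambda>x::'a::chilbert_space. cinner x y)"
  by (rule bounded_linear_intro[where K="norm y"])
     (simp_all add: cinner_add_left scaleC_of_real[symmetric] cinner_scaleC_left
       scaleR_conv_of_real Cauchy_Schwarz)

lemma norm_add_square:
  "(norm (x + y))\<^sup>2 = (norm x)\<^sup>2 + 2 * Re (cinner x y) + (norm (y::'a::chilbert_space))\<^sup>2"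
proof -
  have "Re (cinner y x) = Re (cinner x y)" by (subst cinner_commute) simp
  thus ?thesis by (simp add: Re_cinner_self[symmetric] cinner_simps)
qed

lemma norm_diff_square:
  "(norm (x - y))\<^sup>2 = (norm x)\<^sup>2 - 2 * Re (cinner x y) + (norm (y::'a::chilbert_space))\<^sup>2"
  using norm_add_square[of x "- y"] by (simp add: cinner_simps)

lemma parallelogram_law:
  "(norm (x - y))\<^sup>2 + (norm (x + y))\<^sup>2 = 2 * (norm x)\<^sup>2 + 2 * (norm (y::'a::chilbert_space))\<^sup>2"
  by (simp add: norm_add_square norm_diff_square)

lemma minimizing_sequence_Cauchy:
  fixes xs :: "nat \<Rightarrow> 'a::chilbert_space"
  assumes midpoint: "\<And>x y. x \<in> M \<Longrightarrow> y \<in> M \<Longrightarrow> (1/2) *\<^sub>R (x + y) \<in> M"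
    and lower: "\<And>z. z \<in> M \<Longrightarrow> d \<le> norm z" and d: "d \<ge> 0"
    and xs: "\<And>n. xs n \<in> M" and xs_norm: "\<And>n. norm (xs n) < d + 1 / Suc n"
  shows "Cauchy xs"
proof (rule CauchyI)
  have square_bound: "(norm (xs n))\<^sup>2 \<le> d\<^sup>2 + (2*d+1) * (1 / Suc n)" for n
  proof -
    let ?e = "1 / real (Suc n)"
    have "(norm (xs n))\<^sup>2 \<le> (d + ?e)\<^sup>2" using xs_norm[of n] by (intro power_mono) auto
    also have "\<dots> = d\<^sup>2 + 2*d*?e + ?e * ?e" by (simp add: power2_eq_square algebra_simps)
    also have "\<dots> \<le> d\<^sup>2 + 2*d*?e + 1 * ?e" by (intro add_left_mono mult_right_mono) auto
    finally show ?thesis by (simp add: algebra_simps)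
  qed
  have dist_bound: "(norm (xs m - xs n))\<^sup>2 \<le> 2*(2*d+1) * (1 / Suc m + 1 / Suc n)" for m n
  proof -
    have "2 * d \<le> norm (xs m + xs n)" using lower[OF midpoint[OF xs xs], of m n] by simp
    hence "4 * d\<^sup>2 \<le> (norm (xs m + xs n))\<^sup>2"
      using power_mono[of "2 * d" _ 2] d by (simp add: power_mult_distrib)
    moreover have "2*(2*d+1)*(1/Suc m + 1/Suc n) = 2*((2*d+1)*(1/Suc m)) + 2*((2*d+1)*(1/Suc n))"
      by (simp add: algebra_simps)
    ultimately show ?thesis
      using parallelogram_law[of "xs m" "xs n"] square_bound[of m] square_bound[of n] by linarith
  qed
  fix e :: real assume e: "e > 0"
  obtain N :: nat where N: "4*(2*d+1) / e\<^sup>2 < real N" using reals_Archimedean2 by blast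
  show "\<exists>N. \<forall>m\<ge>N. \<forall>n\<ge>N. norm (xs m - xs n) < e"
  proof (intro exI allI impI)
    fix m n assume mn: "N \<le> m" "N \<le> n"
    have "1 / real (Suc m) \<le> 1 / real (Suc N)" "1 / real (Suc n) \<le> 1 / real (Suc N)"
      using mn by (simp_all add: frac_le)
    hence "2*(2*d+1) * (1 / Suc m + 1 / Suc n) \<le> 2*(2*d+1) * (2 / Suc N)"
      using d by (intro mult_left_mono) auto
    hence "(norm (xs m - xs n))\<^sup>2 \<le> 2*(2*d+1) * (2 / Suc N)"
      using dist_bound[of m n] by linarith
    also have "\<dots> < e\<^sup>2"
      using N e by (simp add: field_simps) (smt (verit) zero_less_power)
    finally show "norm (xs m - xs n) < e" using e by (simp add: power_less_imp_less_base)
  qed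
qed

lemma exists_min_norm_in_level_set:
  fixes l :: "'a::chilbert_space \<Rightarrow> complex"
  assumes l: "bounded_linear l" and l_scaleC: "\<And>c x. l (c *\<^sub>C x) = c * l x" and "l u \<noteq> 0"
  obtains v where "l v = 1" "\<And>z. l z = 1 \<Longrightarrow> norm v \<le> norm z"
proof -
  define M where "M = {x. l x = 1}"
  have "(1 / l u) *\<^sub>C u \<in> M" using \<open>l u \<noteq> 0\<close> unfolding M_def by (simp add: l_scaleC)
  hence M_ne: "norm ` M \<noteq> {}" by auto
  have M_bdd: "bdd_below (norm ` M)" by (rule bdd_belowI[of _ 0]) auto
  define d where "d = Inf (norm ` M)"
  have lower: "d \<le> norm z" if "z \<in> M" for z unfolding d_def using that M_bdd by (simp add: cInf_lower)
  have d: "d \<ge> 0" unfolding d_def by (rule cInf_greatest[OF M_ne]) auto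
  have "\<exists>x \<in> M. norm x < d + 1 / Suc n" for n
    using cInf_lessD[OF M_ne, of "d + 1 / Suc n"] unfolding d_def by auto
  then obtain xs where xs: "\<And>n. xs n \<in> M" and xs_norm: "\<And>n. norm (xs n) < d + 1 / Suc n"
    by metis
  have midpoint: "(1/2) *\<^sub>R (x + y) \<in> M" if "x \<in> M" "y \<in> M" for x y
    using that unfolding M_def by (simp add: linear_simps[OF l] scaleR_conv_of_real)
  obtain v where v: "xs \<longlonglongrightarrow> v"
    using minimizing_sequence_Cauchy[OF midpoint lower d xs xs_norm] Cauchy_convergent_iff
      convergent_def by blast
  have "(\<lambda>n. l (xs n)) \<longlonglongrightarrow> l v" by (rule bounded_linear.tendsto[OF l v])
  moreover have "l (xs n) = 1" for n using xs unfolding M_def by simp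
  ultimately have "l v = 1" by (simp add: LIMSEQ_const_iff)
  moreover have "norm v \<le> norm z" if "l z = 1" for z
  proof -
    have "(\<lambda>n. d + 1 / real (Suc n)) \<longlonglongrightarrow> d + 0"
      by (intro tendsto_add tendsto_const LIMSEQ_Suc[OF lim_inverse_n'])
    hence "norm v \<le> d + 0"
      by (rule LIMSEQ_le[OF tendsto_norm[OF v]]) (use xs_norm less_imp_le in blast)
    thus ?thesis using lower[of z] that unfolding M_def by simp
  qed
  ultimately show ?thesis using that by blast
qed

text \<open>Moving \<open>v\<close> inside the level set by a small multiple of \<open>-\<langle>v, z\<rangle> z\<close> would decrease its norm.\<close>

lemma min_norm_in_level_set_orthogonal:
  fixes l :: "'a::chilbert_space \<Rightarrow> complex"
  assumes l: "bounded_linear l" and l_scaleC: "\<And>c x. l (c *\<^sub>C x) = c * l x"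
    and v: "l v = 1" "\<And>z. l z = 1 \<Longrightarrow> norm v \<le> norm z" and "l z = 0"
  shows "cinner v z = 0"
proof -
  define a where "a = cinner v z"
  define s where "s = 1 / ((norm z)\<^sup>2 + 1)"
  have s_pos: "(norm z)\<^sup>2 + 1 > 0" by (simp add: add_nonneg_pos)
  hence s: "s > 0" "s * (norm z)\<^sup>2 < 2" unfolding s_def by (simp_all add: field_simps)
  define t where "t = - (complex_of_real s * a)"
  have "l (v + t *\<^sub>C z) = 1" using v \<open>l z = 0\<close> by (simp add: linear_simps[OF l] l_scaleC)
  hence "(norm v)\<^sup>2 \<le> (norm (v + t *\<^sub>C z))\<^sup>2" using v(2) by (simp add: power_mono)
  also have "\<dots> = (norm v)\<^sup>2 + 2 * Re (cinner v (t *\<^sub>C z)) + (norm (t *\<^sub>C z))\<^sup>2"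
    by (rule norm_add_square)
  also have "cinner v (t *\<^sub>C z) = - complex_of_real s * (cnj a * a)"
    unfolding t_def by (simp add: cinner.scaleC_right a_def[symmetric])
  also have "cnj a * a = complex_of_real ((cmod a)\<^sup>2)"
    using complex_norm_square[of a] by (simp add: mult.commute)
  also have "norm (t *\<^sub>C z) = s * cmod a * norm z"
    unfolding t_def using s by (simp add: norm_scaleC norm_mult)
  finally have "0 \<le> s * (cmod a)\<^sup>2 * (s * (norm z)\<^sup>2 - 2)"
    by (simp add: power2_eq_square algebra_simps del: of_real_power)
  hence "s * (cmod a)\<^sup>2 \<le> 0" using s by (simp add: zero_le_mult_iff)
  thus ?thesis unfolding a_def using s by (simp add: mult_le_0_iff)
qed

theorem Riesz_representation:
  fixes l :: "'a::chilbert_space \<Rightarrow> complex"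
  assumes l: "bounded_linear l" and l_scaleC: "\<And>c x. l (c *\<^sub>C x) = c * l x"
  obtains w where "\<And>x. l x = cinner x w"
proof (cases "\<forall>x. l x = 0")
  case True thus ?thesis using that[of 0] by simp
next
  case False
  then obtain v where v: "l v = 1" "\<And>z. l z = 1 \<Longrightarrow> norm v \<le> norm z"
    using exists_min_norm_in_level_set[OF l l_scaleC] by blast
  have "v \<noteq> 0" using v(1) linear_simps(3)[OF l] by auto
  have "l x = cinner x (complex_of_real (1 / (norm v)\<^sup>2) *\<^sub>C v)" for x
  proof -
    have "l (x - l x *\<^sub>C v) = 0" by (simp add: linear_simps[OF l] l_scaleC v(1))
    hence "cinner v (x - l x *\<^sub>C v) = 0" using min_norm_in_level_set_orthogonal[OF l l_scaleC v] by blast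
    hence "cinner x v = l x * cinner v v"
      by (subst cinner_commute) (simp add: cinner_simps cinner_self del: of_real_power)
    thus ?thesis using \<open>v \<noteq> 0\<close> by (simp add: cinner.scaleC_right cinner_self del: of_real_power)
  qed
  thus ?thesis by (rule that)
qed

lemma bounded_clinear_opI:
  assumes "\<And>x y. A (x + y) = A x + A y" "\<And>c x. A (c *\<^sub>C x) = c *\<^sub>C A x"
    "\<And>x. norm (A x) \<le> K * norm x"
  shows "bounded_clinear_op A"
  using assms unfolding bounded_clinear_op_def by blast

lemma bounded_clinear_op_bound:
  assumes "bounded_clinear_op A"
  obtains K where "K > 0" "\<And>x. norm (A x) \<le> K * norm x"
proof -
  from assms obtain K where K: "\<And>x. norm (A x) \<le> K * norm x"
    by (auto simp: bounded_clinear_op_def)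
  have "norm (A x) \<le> max K 1 * norm x" for x
    using K by (meson max.cobounded1 mult_right_mono norm_ge_zero order_trans)
  thus ?thesis using that[of "max K 1"] by simp
qed

lemma bounded_clinear_op_bounded_linear:
  assumes "bounded_clinear_op A" shows "bounded_linear A"
proof -
  obtain K where "\<And>x. norm (A x) \<le> K * norm x" using bounded_clinear_op_bound[OF assms] by blast
  thus ?thesis using assms
    by (intro bounded_linear_intro[of _ K])
       (auto simp: bounded_clinear_op_def mult.commute scaleC_of_real[symmetric])
qed

lemma bounded_clinear_op_simps:
  assumes "bounded_clinear_op A"
  shows "A (x + y) = A x + A y" "A (c *\<^sub>C x) = c *\<^sub>C A x" "A (r *\<^sub>R x) = r *\<^sub>R A x"
    "A (x - y) = A x - A y" "A (- x) = - A x" "A 0 = 0"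
  using assms linear_simps[OF bounded_clinear_op_bounded_linear[OF assms]]
  by (auto simp: bounded_clinear_op_def)

lemma bounded_clinear_op_id: "bounded_clinear_op (\<lambda>x. x)"
  by (rule bounded_clinear_opI[where K=1]) auto

lemma bounded_clinear_op_comp:
  assumes "bounded_clinear_op A" "bounded_clinear_op B" shows "bounded_clinear_op (A \<circ> B)"
proof -
  obtain K where K: "K > 0" "\<And>x. norm (A x) \<le> K * norm x"
    using bounded_clinear_op_bound[OF assms(1)] by blast
  obtain L where L: "L > 0" "\<And>x. norm (B x) \<le> L * norm x"
    using bounded_clinear_op_bound[OF assms(2)] by blast
  have "norm (A (B x)) \<le> K * L * norm x" for x
    using order_trans[OF K(2)[of "B x"] mult_left_mono[OF L(2)[of x]]] K(1) by (simp add: mult.assoc)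
  thus ?thesis using assms by (intro bounded_clinear_opI[where K="K*L"]) (auto simp: bounded_clinear_op_simps)
qed

lemma norm_funpow_le:
  fixes T :: "'a::real_normed_vector \<Rightarrow> 'a"
  assumes "\<And>x. norm (T x) \<le> q * norm x" "q \<ge> 0"
  shows "norm ((T ^^ n) x) \<le> q ^ n * norm x"
proof (induction n)
  case (Suc n)
  have "norm ((T ^^ Suc n) x) \<le> q * norm ((T ^^ n) x)" using assms(1)[of "(T ^^ n) x"] by simp
  also have "\<dots> \<le> q * (q ^ n * norm x)" using Suc assms(2) by (intro mult_left_mono) auto
  finally show ?case by (simp add: mult.assoc)
qed simp

lemma norm_le_if_norm_square_le:
  fixes x :: "'a::chilbert_space"
  assumes "(norm x)\<^sup>2 \<le> K * norm x * norm y" "K \<ge> 0"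
  shows "norm x \<le> K * norm y"
  using assms by (cases "norm x = 0") (auto simp: power2_eq_square mult_le_cancel_right mult.commute)

lemma bounded_clinear_op_comp_bounded:
  assumes A: "bounded_clinear_op A" and "\<exists>C. \<forall>x. norm (f x) \<le> C"
  shows "\<exists>C. \<forall>x. norm ((A \<circ> f) x) \<le> C"
proof -
  obtain C where C: "\<And>x. norm (f x) \<le> C" using assms(2) by blast
  obtain K where K: "K > 0" "\<And>x. norm (A x) \<le> K * norm x" using bounded_clinear_op_bound[OF A] by blast
  have "norm ((A \<circ> f) x) \<le> K * C" for x using order_trans[OF K(2) mult_left_mono[OF C]] K(1) by simp
  thus ?thesis by blast
qed

definition adj :: "('h::chilbert_space \<Rightarrow> 'h) \<Rightarrow> 'h \<Rightarrow> 'h" where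
  "adj A y = (SOME w. \<forall>x. cinner (A x) y = cinner x w)"

lemma cinner_adj_right:
  assumes A: "bounded_clinear_op A" shows "cinner (A x) y = cinner x (adj A y)"
proof -
  have l: "bounded_linear (\<lambda>x. cinner (A x) y)"
    by (rule bounded_linear_compose[OF bounded_linear_cinner_left bounded_clinear_op_bounded_linear[OF A]])
  have l_scaleC: "cinner (A (c *\<^sub>C x)) y = c * cinner (A x) y" for c x
    by (simp add: bounded_clinear_op_simps[OF A] cinner_scaleC_left)
  have "\<exists>w. \<forall>x. cinner (A x) y = cinner x w"
    by (rule Riesz_representation[OF l l_scaleC]) blast
  hence "\<forall>x. cinner (A x) y = cinner x (SOME w. \<forall>x. cinner (A x) y = cinner x w)"
    by (rule someI_ex)
  thus ?thesis unfolding adj_def by blast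
qed

lemma cinner_adj_left: "bounded_clinear_op A \<Longrightarrow> cinner y (A x) = cinner (adj A y) x"
  by (metis cinner_adj_right cinner_commute)

lemma bounded_clinear_op_adj:
  assumes A: "bounded_clinear_op A" shows "bounded_clinear_op (adj A)"
proof -
  obtain K where K: "K > 0" "\<And>x. norm (A x) \<le> K * norm x" using bounded_clinear_op_bound[OF A] by blast
  show ?thesis
  proof (rule bounded_clinear_opI[where K=K])
    show "adj A (x + y) = adj A x + adj A y" for x y
      by (rule cinner_eqI_right) (simp add: cinner_adj_right[OF A, symmetric] cinner.add_right)
    show "adj A (c *\<^sub>C x) = c *\<^sub>C adj A x" for c x
      by (rule cinner_eqI_right) (simp add: cinner_adj_right[OF A, symmetric] cinner.scaleC_right)
  next
    fix y
    have "(norm (adj A y))\<^sup>2 = Re (cinner (A (adj A y)) y)"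
      by (simp add: Re_cinner_self[symmetric] cinner_adj_right[OF A])
    also have "\<dots> \<le> norm (A (adj A y)) * norm y" by (rule Re_cinner_le)
    also have "\<dots> \<le> K * norm (adj A y) * norm y" using K by (intro mult_right_mono) auto
    finally show "norm (adj A y) \<le> K * norm y"
      using K(1) by (intro norm_le_if_norm_square_le) auto
  qed
qed

lemma positive_op_cinner_sym:
  assumes "positive_op A" shows "cinner (A x) y = cinner x (A y)"
proof -
  have A: "bounded_clinear_op A" using assms by (simp add: positive_op_def)
  have "cinner (A x) y - cinner x (A y) = 0"
  proof (rule sesquilinear_eq_zero_if_diagonal_zero[where D="\<lambda>x y. cinner (A x) y - cinner x (A y)"])
    fix x
    have "Im (cinner (A x) x) = 0" using assms by (simp add: positive_op_def)
    thus "cinner (A x) x - cinner x (A x) = 0" by (subst cinner_commute) (simp add: complex_eq_iff)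
  qed (auto simp: bounded_clinear_op_simps[OF A] cinner_simps algebra_simps)
  thus ?thesis by simp
qed

lemma adj_positive_op:
  assumes "positive_op A" shows "adj A = A"
proof (rule ext, rule cinner_eqI_right)
  have A: "bounded_clinear_op A" using assms by (simp add: positive_op_def)
  fix y z show "cinner z (adj A y) = cinner z (A y)"
    by (simp only: cinner_adj_right[OF A, symmetric] positive_op_cinner_sym[OF assms])
qed

lemma GL_D:
  assumes "A \<in> GL"
  shows "bounded_clinear_op A" "bij A" "bounded_clinear_op (inv A)"
    "\<And>x. inv A (A x) = x" "\<And>x. A (inv A x) = x"
  using assms unfolding GL_def by (auto simp: bij_def inv_f_f surj_f_inv_f)

lemma GL_pos_subset_GL: "GL_pos \<subseteq> GL"
  by (auto simp: GL_pos_def)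

lemma GL_comp: assumes "A \<in> GL" "B \<in> GL" shows "A \<circ> B \<in> GL"
proof -
  have "inv (A \<circ> B) = inv B \<circ> inv A"
    using GL_D(2)[OF assms(1)] GL_D(2)[OF assms(2)] by (simp add: o_inv_distrib bij_def)
  thus ?thesis using GL_D[OF assms(1)] GL_D[OF assms(2)]
    unfolding GL_def by (auto intro: bounded_clinear_op_comp bij_comp)
qed

lemma GL_if_bounded_below:
  assumes A: "bounded_clinear_op A" and "surj A" and below: "\<And>x. a * norm x \<le> norm (A x)"
    and "a > 0"
  shows "A \<in> GL"
proof -
  have "inj A"
  proof (rule injI)
    fix x y assume "A x = A y"
    thus "x = y" using below[of "x - y"] \<open>a > 0\<close>
      by (simp add: bounded_clinear_op_simps[OF A] mult_le_0_iff)
  qed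
  hence bij: "bij A" using \<open>surj A\<close> by (simp add: bij_def)
  have iA: "inv A (A x) = x" and Ai: "A (inv A x) = x" for x
    using bij by (simp_all add: bij_def inv_f_f surj_f_inv_f)
  have "bounded_clinear_op (inv A)"
  proof (rule bounded_clinear_opI[where K="1/a"])
    fix x
    show "norm (inv A x) \<le> 1 / a * norm x" using below[of "inv A x"] \<open>a > 0\<close> by (simp add: Ai field_simps)
  next
    show "inv A (x + y) = inv A x + inv A y" for x y
      using iA[of "inv A x + inv A y"] by (simp add: bounded_clinear_op_simps[OF A] Ai)
    show "inv A (c *\<^sub>C x) = c *\<^sub>C inv A x" for c x
      using iA[of "c *\<^sub>C inv A x"] by (simp add: bounded_clinear_op_simps[OF A] Ai)
  qed
  thus ?thesis using A bij by (simp add: GL_def)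
qed

text \<open>The Neumann series \<open>\<Sum>n. T\<^sup>n y\<close> solves \<open>x - T x = y\<close>.\<close>

lemma surj_id_minus_contraction:
  assumes T: "bounded_clinear_op T" and "\<And>x. norm (T x) \<le> q * norm x" "0 \<le> q" "q < 1"
  shows "surj (\<lambda>x. x - T x)"
proof -
  have summable: "summable (\<lambda>n. (T ^^ n) y)" for y
  proof (rule summable_comparison_test')
    show "summable (\<lambda>n. norm y * q ^ n)" using assms by (intro summable_mult summable_geometric) simp
    show "norm ((T ^^ n) y) \<le> norm y * q ^ n" for n
      using norm_funpow_le[OF assms(2,3), of n y] by (simp add: mult.commute)
  qed
  have "(\<Sum>n. (T ^^ n) y) - T (\<Sum>n. (T ^^ n) y) = y" for y
  proof -
    have "T (\<Sum>n. (T ^^ n) y) = (\<Sum>n. (T ^^ Suc n) y)"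
      using bounded_linear.suminf[OF bounded_clinear_op_bounded_linear[OF T] summable] by simp
    thus ?thesis using suminf_split_head[OF summable[of y]] by simp
  qed
  thus ?thesis unfolding surj_def by (metis (no_types, lifting))
qed

lemma coercive_shift_contraction:
  fixes S :: "'h::chilbert_space \<Rightarrow> 'h"
  assumes S: "bounded_clinear_op S" and coercive: "\<And>x. a * (norm x)\<^sup>2 \<le> Re (cinner (S x) x)"
    and "a > 0"
  obtains c q where "c > 0" "q \<ge> 0" "q < 1" "\<And>x. norm (x - (1/c) *\<^sub>R S x) \<le> q * norm x"
proof -
  obtain K where K: "K > 0" "\<And>x. norm (S x) \<le> K * norm x" using bounded_clinear_op_bound[OF S] by blast
  define K' where "K' = max K a"
  have K': "K' > 0" "K' \<ge> a" "norm (S x) \<le> K' * norm x" for x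
    using K(1) order_trans[OF K(2) mult_right_mono[of K K' "norm x"]] \<open>a > 0\<close>
    unfolding K'_def by auto
  txt \<open>\<open>\<parallel>x - S x / c\<parallel>\<^sup>2 \<le> (1 - 2 a / c + K'\<^sup>2 / c\<^sup>2) \<parallel>x\<parallel>\<^sup>2\<close>, minimal at \<open>c = K'\<^sup>2 / a\<close>.\<close>
  define c where "c = K'\<^sup>2 / a"
  have c: "c > 0" unfolding c_def using K' \<open>a > 0\<close> by simp
  define q where "q = sqrt (1 - a\<^sup>2 / K'\<^sup>2)"
  have aK: "a\<^sup>2 / K'\<^sup>2 \<le> 1" using K' \<open>a > 0\<close> by (simp add: power_mono)
  have q: "q \<ge> 0" "q < 1" unfolding q_def using aK K' \<open>a > 0\<close> by (simp_all add: field_simps)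
  have "norm (x - (1/c) *\<^sub>R S x) \<le> q * norm x" for x
  proof -
    have "Re (cinner x ((1/c) *\<^sub>R S x)) = (1/c) * Re (cinner (S x) x)"
      by (subst cinner_commute) (simp add: scaleC_of_real[symmetric] cinner_scaleC_left)
    hence "(norm (x - (1/c) *\<^sub>R S x))\<^sup>2
        = (norm x)\<^sup>2 - 2 * ((1/c) * Re (cinner (S x) x)) + (1/c)\<^sup>2 * (norm (S x))\<^sup>2"
      using c by (simp add: norm_diff_square power_divide)
    moreover have "(1/c) * (a * (norm x)\<^sup>2) \<le> (1/c) * Re (cinner (S x) x)"
      using coercive c by (intro mult_left_mono) auto
    moreover have "(1/c)\<^sup>2 * (norm (S x))\<^sup>2 \<le> (1/c)\<^sup>2 * (K' * norm x)\<^sup>2"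
      using K'(3)[of x] by (intro mult_left_mono power_mono) auto
    ultimately have "(norm (x - (1/c) *\<^sub>R S x))\<^sup>2
        \<le> (norm x)\<^sup>2 - 2 * ((1/c) * (a * (norm x)\<^sup>2)) + (1/c)\<^sup>2 * (K' * norm x)\<^sup>2"
      by linarith
    also have "\<dots> = (q * norm x)\<^sup>2"
      unfolding c_def q_def using K' \<open>a > 0\<close> aK by (simp add: field_simps power2_eq_square)
    finally show ?thesis using q by (simp add: power2_le_iff_abs_le)
  qed
  with c q show ?thesis by (rule that)
qed

lemma bounded_clinear_op_scaleR:
  assumes A: "bounded_clinear_op A" shows "bounded_clinear_op (\<lambda>x. r *\<^sub>R A x)"
proof -
  obtain K where K: "K > 0" "\<And>x. norm (A x) \<le> K * norm x" using bounded_clinear_op_bound[OF A] by blast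
  show ?thesis
    using mult_left_mono[OF K(2), of "\<bar>r\<bar>"]
    by (intro bounded_clinear_opI[where K="\<bar>r\<bar> * K"])
       (simp_all add: bounded_clinear_op_simps[OF A] scaleR_scaleC_commute scaleR_add_right mult.assoc)
qed

lemma bounded_clinear_op_id_minus_scaleR:
  assumes S: "bounded_clinear_op S" shows "bounded_clinear_op (\<lambda>x. x - r *\<^sub>R S x)"
proof -
  obtain K where K: "K > 0" "\<And>x. norm (S x) \<le> K * norm x" using bounded_clinear_op_bound[OF S] by blast
  have "norm (x - r *\<^sub>R S x) \<le> (1 + \<bar>r\<bar> * K) * norm x" for x
  proof -
    have "norm (x - r *\<^sub>R S x) \<le> norm x + \<bar>r\<bar> * norm (S x)"
      using norm_triangle_ineq4[of x "r *\<^sub>R S x"] by simp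
    also have "\<dots> \<le> norm x + \<bar>r\<bar> * (K * norm x)" using K by (intro add_left_mono mult_left_mono) auto
    finally show ?thesis by (simp add: algebra_simps)
  qed
  thus ?thesis
    by (intro bounded_clinear_opI[where K="1 + \<bar>r\<bar> * K"])
       (simp_all add: bounded_clinear_op_simps[OF S] scaleC_diff_right scaleR_scaleC_commute
         scaleR_add_right)
qed

lemma coercive_imp_GL:
  fixes S :: "'h::chilbert_space \<Rightarrow> 'h"
  assumes S: "bounded_clinear_op S" and coercive: "\<And>x. a * (norm x)\<^sup>2 \<le> Re (cinner (S x) x)"
    and "a > 0"
  shows "S \<in> GL"
proof (rule GL_if_bounded_below[OF S _ _ \<open>a > 0\<close>])
  show "a * norm x \<le> norm (S x)" for x
    using order_trans[OF coercive[of x] Re_cinner_le[of "S x" x]] \<open>a > 0\<close>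
    by (cases "x = 0") (auto simp: power2_eq_square mult.assoc mult_le_cancel_right)
  obtain c q where c: "c > 0" and q: "q \<ge> 0" "q < 1"
    and contraction: "\<And>x. norm (x - (1/c) *\<^sub>R S x) \<le> q * norm x"
    using coercive_shift_contraction[OF S coercive \<open>a > 0\<close>] by blast
  have "surj (\<lambda>x. x - (x - (1/c) *\<^sub>R S x))"
    by (rule surj_id_minus_contraction[OF bounded_clinear_op_id_minus_scaleR[OF S] contraction q])
  hence "surj (\<lambda>x. (1/c) *\<^sub>R S x)" by simp
  show "surj S"
    unfolding surj_def
  proof
    fix y
    obtain x where "(1/c) *\<^sub>R y = (1/c) *\<^sub>R S x"
      using \<open>surj (\<lambda>x. (1/c) *\<^sub>R S x)\<close> by (blast dest: surjD)
    hence "y = S x" using c by simp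
    thus "\<exists>x. y = S x" ..
  qed
qed

lemma unitary_groupD:
  assumes "V \<in> unitary_group"
  shows "bounded_clinear_op V" "surj V" "\<And>x y. cinner (V x) (V y) = cinner x y"
    "\<And>x. norm (V x) = norm x"
  using assms by (simp_all add: unitary_group_def norm_eq_sqrt_cinner)

lemma unitary_group_subset_GL: "unitary_group \<subseteq> GL"
proof
  fix V assume V: "V \<in> unitary_group"
  show "V \<in> GL" by (rule GL_if_bounded_below[where a=1]) (simp_all add: unitary_groupD[OF V])
qed

lemma cinner_unitary_right:
  assumes "V \<in> unitary_group" shows "cinner y (V z) = cinner (inv V y) z"
proof -
  have "V (inv V y) = y" using GL_D(5) unitary_group_subset_GL assms by blast
  thus ?thesis using unitary_groupD(3)[OF assms, of "inv V y" z] by simp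
qed

text \<open>A consequence of the real Cauchy product of the norms.\<close>

lemma Cauchy_product_norm_tail_tendsto_zero:
  fixes a :: "nat \<Rightarrow> 'a::real_normed_vector" and b :: "nat \<Rightarrow> 'b::real_normed_vector"
  assumes a: "summable (\<lambda>k. norm (a k))" and b: "summable (\<lambda>k. norm (b k))"
  shows "(\<lambda>n. \<Sum>(i,j)\<in>{..<n} \<times> {..<n} - {(i,j). i + j < n}. norm (a i) * norm (b j)) \<longlonglongrightarrow> 0"
proof -
  have "(\<lambda>n. \<Sum>k<n. \<Sum>i\<le>k. norm (a i) * norm (b (k - i))) \<longlonglongrightarrow> (\<Sum>k. norm (a k)) * (\<Sum>k. norm (b k))"
    using Cauchy_product_sums[of "\<lambda>k. norm (a k)" "\<lambda>k. norm (b k)"] a b by (simp add: sums_def)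
  from tendsto_diff[OF tendsto_mult[OF summable_LIMSEQ[OF a] summable_LIMSEQ[OF b]] this]
  have "(\<lambda>n. (\<Sum>k<n. norm (a k)) * (\<Sum>k<n. norm (b k))
      - (\<Sum>k<n. \<Sum>i\<le>k. norm (a i) * norm (b (k - i)))) \<longlonglongrightarrow> 0"
    by simp
  moreover have "(\<Sum>(i,j)\<in>{..<n} \<times> {..<n} - {(i,j). i + j < n}. norm (a i) * norm (b j))
      = (\<Sum>k<n. norm (a k)) * (\<Sum>k<n. norm (b k)) - (\<Sum>k<n. \<Sum>i\<le>k. norm (a i) * norm (b (k - i)))"
    for n
    by (subst sum_diff) (auto simp only: sum_product sum.cartesian_product sum.triangle_reindex)
  ultimately show ?thesis by simp
qed

lemma bounded_bilinear_Cauchy_product_sums: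
  fixes a :: "nat \<Rightarrow> 'a::banach" and b :: "nat \<Rightarrow> 'b::banach"
    and prod :: "'a \<Rightarrow> 'b \<Rightarrow> 'c::real_normed_vector"
  assumes "bounded_bilinear prod" and a: "summable (\<lambda>k. norm (a k))" and b: "summable (\<lambda>k. norm (b k))"
  shows "(\<lambda>k. \<Sum>i\<le>k. prod (a i) (b (k - i))) sums (prod (\<Sum>k. a k) (\<Sum>k. b k))"
proof -
  interpret bounded_bilinear prod by fact
  let ?square = "\<lambda>n::nat. {..<n} \<times> {..<n}" and ?triangle = "\<lambda>n::nat. {(i,j). i + j < n}"
  have finite_square: "finite (?square n)" and triangle: "?triangle n \<subseteq> ?square n" for n
    by auto
  obtain K where K: "\<And>x y. norm (prod x y) \<le> norm x * norm y * K" using pos_bounded by blast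
  have "(\<lambda>n. prod (\<Sum>k<n. a k) (\<Sum>k<n. b k)) \<longlonglongrightarrow> prod (\<Sum>k. a k) (\<Sum>k. b k)"
    by (intro tendsto summable_LIMSEQ summable_norm_cancel[OF a] summable_norm_cancel[OF b])
  hence square: "(\<lambda>n. \<Sum>(i,j)\<in>?square n. prod (a i) (b j)) \<longlonglongrightarrow> prod (\<Sum>k. a k) (\<Sum>k. b k)"
    by (subst (asm) sum_left, simp only: sum_right sum.cartesian_product)
  have bound: "norm (\<Sum>(i,j)\<in>?square n - ?triangle n. prod (a i) (b j))
      \<le> K * (\<Sum>(i,j)\<in>?square n - ?triangle n. norm (a i) * norm (b j))" for n
    unfolding sum_distrib_left
  proof (rule order_trans[OF norm_sum sum_mono])
    fix p :: "nat \<times> nat"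
    show "norm (case p of (i, j) \<Rightarrow> prod (a i) (b j)) \<le> K * (case p of (i, j) \<Rightarrow> norm (a i) * norm (b j))"
      using K[of "a (fst p)" "b (snd p)"] by (cases p) (simp add: mult.commute)
  qed
  have "(\<lambda>n. \<Sum>(i,j)\<in>?square n - ?triangle n. prod (a i) (b j)) \<longlonglongrightarrow> 0"
    by (rule Lim_null_comparison[OF always_eventually
          tendsto_mult_right_zero[OF Cauchy_product_norm_tail_tendsto_zero[OF a b]]])
       (use bound in blast)
  hence "(\<lambda>n. (\<Sum>(i,j)\<in>?square n. prod (a i) (b j)) - (\<Sum>(i,j)\<in>?triangle n. prod (a i) (b j)))
      \<longlonglongrightarrow> 0"
    by (simp only: sum_diff[OF finite_square triangle])
  from Lim_transform2[OF square this] show ?thesis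
    by (simp only: sums_def sum.triangle_reindex)
qed

text \<open>The Taylor coefficients of \<open>\<surd>(1 - t)\<close>.\<close>

definition sqrt_coeff :: "nat \<Rightarrow> real" where
  "sqrt_coeff n = (-1)^n * ((1/2) gchoose n)"

lemma sqrt_coeff_Suc: "sqrt_coeff (Suc k) = sqrt_coeff k * ((of_nat k - 1/2) / of_nat (Suc k))"
proof -
  have "of_nat (Suc k) * ((1/2::real) gchoose Suc k) = (1/2 - of_nat k) * ((1/2) gchoose k)"
    using gbinomial_absorption[of k "1/2::real"] gbinomial_absorb_comp[of "1/2::real" k] by simp
  hence step: "(1/2::real) gchoose Suc k = (1/2 - of_nat k) / of_nat (Suc k) * ((1/2) gchoose k)"
    by (simp add: field_simps del: of_nat_Suc)
  show ?thesis unfolding sqrt_coeff_def step by (simp add: field_simps del: of_nat_Suc)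
qed

lemma sqrt_coeff_nonpos: "n \<ge> 1 \<Longrightarrow> sqrt_coeff n \<le> 0"
proof (induction n rule: dec_induct)
  case (step n)
  have "(of_nat n - 1/2) / of_nat (Suc n) \<ge> (0::real)" using step(1) by simp
  from mult_nonpos_nonneg[OF step(3) this] show ?case unfolding sqrt_coeff_Suc .
qed (simp add: sqrt_coeff_def)

lemma sums_sqrt_coeff: "\<bar>q\<bar> < 1 \<Longrightarrow> (\<lambda>n. sqrt_coeff n * q^n) sums sqrt (1 - q)"
  using sqrt_series[of "-q"] by (simp add: sqrt_coeff_def power_minus' mult_ac)

lemma summable_abs_sqrt_coeff:
  assumes "0 \<le> q" "q < 1" shows "summable (\<lambda>n. \<bar>sqrt_coeff n\<bar> * q^n)"
proof (rule summable_comparison_test'[where N=1])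
  show "summable (\<lambda>n. - (sqrt_coeff n * q^n))"
    using sums_sqrt_coeff[of q] assms by (intro summable_minus) (auto simp: sums_iff)
  show "norm (\<bar>sqrt_coeff n\<bar> * q^n) \<le> - (sqrt_coeff n * q^n)" if "1 \<le> n" for n
    using sqrt_coeff_nonpos[OF that] assms by (simp add: abs_mult)
qed

text \<open>The coefficient form of \<open>\<surd>(1 - t) \<cdot> \<surd>(1 - t) = 1 - t\<close>, via Vandermonde's identity.\<close>

lemma sqrt_coeff_convolution:
  "(\<Sum>i\<le>k. sqrt_coeff i * sqrt_coeff (k - i)) = (if k = 0 then 1 else if k = 1 then -1 else 0)"
proof -
  have "(\<Sum>i\<le>k. sqrt_coeff i * sqrt_coeff (k - i))
      = (\<Sum>i\<le>k. (-1)^k * (((1/2) gchoose i) * ((1/2) gchoose (k - i))))"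
  proof (rule sum.cong)
    fix i assume "i \<in> {..k}"
    hence sign: "(-1::real)^i * (-1)^(k-i) = (-1)^k" by (simp add: power_add[symmetric])
    have "sqrt_coeff i * sqrt_coeff (k - i)
        = ((-1::real)^i * (-1)^(k-i)) * (((1/2) gchoose i) * ((1/2) gchoose (k - i)))"
      unfolding sqrt_coeff_def by (simp only: ac_simps)
    thus "sqrt_coeff i * sqrt_coeff (k - i) = (-1)^k * (((1/2) gchoose i) * ((1/2) gchoose (k - i)))"
      by (simp only: sign)
  qed simp
  also have "\<dots> = (-1)^k * ((1/2 + 1/2 :: real) gchoose k)"
    by (simp only: sum_distrib_left[symmetric] atLeast0AtMost[symmetric] gbinomial_Vandermonde)
  also have "\<dots> = (-1)^k * real (1 choose k)"
    using binomial_gbinomial[of 1 k, where 'a=real] by simp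
  also have "\<dots> = (if k = 0 then 1 else if k = 1 then -1 else 0)"
    by (cases k; cases "k - 1") auto
  finally show ?thesis .
qed

primrec blinfun_pow :: "('a::real_normed_vector \<Rightarrow>\<^sub>L 'a) \<Rightarrow> nat \<Rightarrow> 'a \<Rightarrow>\<^sub>L 'a" where
  "blinfun_pow B 0 = id_blinfun"
| "blinfun_pow B (Suc n) = B o\<^sub>L blinfun_pow B n"

lemma blinfun_apply_blinfun_pow: "blinfun_apply (blinfun_pow B n) = blinfun_apply B ^^ n"
  by (induction n) auto

lemma blinfun_pow_add: "blinfun_pow B i o\<^sub>L blinfun_pow B j = blinfun_pow B (i + j)"
  by (rule blinfun_eqI) (simp add: blinfun_apply_blinfun_pow funpow_add)

lemma norm_blinfun_pow_le: "norm (blinfun_pow B n) \<le> norm B ^ n"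
proof (induction n)
  case (Suc n)
  thus ?case using norm_blinfun_compose[of B "blinfun_pow B n"]
    by (simp add: order_trans mult_left_mono)
qed (simp add: norm_blinfun_id_le)

lemma summable_norm_blinfun_sqrt_series:
  fixes T :: "'a::real_normed_vector \<Rightarrow>\<^sub>L 'a"
  assumes "norm T < 1"
  shows "summable (\<lambda>n. norm (sqrt_coeff n *\<^sub>R blinfun_pow T n))"
  by (rule summable_comparison_test'[OF summable_abs_sqrt_coeff[OF norm_ge_zero assms], of 0])
     (simp add: mult_left_mono norm_blinfun_pow_le)

lemma blinfun_sqrt_series_square:
  fixes T :: "'a::banach \<Rightarrow>\<^sub>L 'a"
  assumes "norm T < 1"
  defines "R \<equiv> \<Sum>n. sqrt_coeff n *\<^sub>R blinfun_pow T n"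
  shows "R o\<^sub>L R = id_blinfun - T"
proof -
  note summable = summable_norm_blinfun_sqrt_series[OF assms(1)]
  interpret compose: bounded_bilinear "(o\<^sub>L) :: 'a \<Rightarrow>\<^sub>L 'a \<Rightarrow> _"
    by (rule bounded_bilinear_blinfun_compose)
  have "(\<Sum>i\<le>k. (sqrt_coeff i *\<^sub>R blinfun_pow T i) o\<^sub>L (sqrt_coeff (k - i) *\<^sub>R blinfun_pow T (k - i)))
      = (\<Sum>i\<le>k. sqrt_coeff i * sqrt_coeff (k - i)) *\<^sub>R blinfun_pow T k" for k
    by (auto simp: compose.scaleR_left compose.scaleR_right blinfun_pow_add scaleR_sum_left
        intro!: sum.cong)
  hence "(\<lambda>k. (if k = 0 then 1 else if k = 1 then -1 else 0) *\<^sub>R blinfun_pow T k) sums (R o\<^sub>L R)"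
    using bounded_bilinear_Cauchy_product_sums[OF compose.bounded_bilinear_axioms summable summable]
    unfolding R_def by (simp add: sqrt_coeff_convolution)
  moreover have "(\<lambda>k. (if k = 0 then 1 else if k = 1 then -1 else 0) *\<^sub>R blinfun_pow T k)
      sums (id_blinfun - T)"
    using sums_finite[of "{0, 1}"
        "\<lambda>k. (if k = 0 then 1 else if k = 1 then -1 else 0) *\<^sub>R blinfun_pow T k"]
      blinfun_eqI[of "T o\<^sub>L id_blinfun" T]
    by simp
  ultimately show ?thesis using sums_unique2 by blast
qed

lemma Im_cinner_self_if_symmetric:
  assumes "cinner (A x) x = cinner x (A x)" shows "Im (cinner (A x) x) = 0"
  using assms cinner_commute[of x "A x"] by (metis cnj.sel(2) complex_cnj_cancel_iff neg_equal_zero)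

lemma cinner_funpow_symmetric:
  assumes symmetric: "\<And>x y. cinner (T x) y = cinner x (T y)"
  shows "cinner ((T ^^ n) x) y = cinner x ((T ^^ n) y)"
proof (induction n arbitrary: y)
  case (Suc n)
  have "cinner ((T ^^ Suc n) x) y = cinner x ((T ^^ n) (T y))" by (simp add: symmetric Suc)
  thus ?case by (simp add: funpow_swap1)
qed simp

definition sqrt_series :: "('a::real_normed_vector \<Rightarrow> 'a) \<Rightarrow> 'a \<Rightarrow> 'a" where
  "sqrt_series T x = (\<Sum>n. sqrt_coeff n *\<^sub>R (T ^^ n) x)"

locale strict_contraction =
  fixes T :: "'h::chilbert_space \<Rightarrow> 'h" and q :: real
  assumes bounded: "bounded_clinear_op T" and norm_le: "\<And>x. norm (T x) \<le> q * norm x"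
    and q_nonneg: "0 \<le> q" and q_less_1: "q < 1"
begin

lemma summable_sqrt_series: "summable (\<lambda>n. sqrt_coeff n *\<^sub>R (T ^^ n) x)"
proof (rule summable_comparison_test')
  show "summable (\<lambda>n. \<bar>sqrt_coeff n\<bar> * q ^ n * norm x)"
    by (rule summable_mult2[OF summable_abs_sqrt_coeff[OF q_nonneg q_less_1]])
  show "norm (sqrt_coeff n *\<^sub>R (T ^^ n) x) \<le> \<bar>sqrt_coeff n\<bar> * q ^ n * norm x" for n
    using norm_funpow_le[OF norm_le q_nonneg, of n x] by (simp add: mult.assoc mult_left_mono)
qed

lemma bounded_linear_suminf_sqrt_series:
  "bounded_linear L \<Longrightarrow> L (sqrt_series T x) = (\<Sum>n. L (sqrt_coeff n *\<^sub>R (T ^^ n) x))"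
  unfolding sqrt_series_def by (rule bounded_linear.suminf[OF _ summable_sqrt_series])

lemma blinfun_apply_Blinfun_T: "blinfun_apply (Blinfun T) = T"
  by (rule bounded_linear_Blinfun_apply[OF bounded_clinear_op_bounded_linear[OF bounded]])

lemma norm_Blinfun_T: "norm (Blinfun T) < 1"
proof -
  have "norm (Blinfun T) \<le> q"
    by (rule norm_blinfun_bound[OF q_nonneg]) (simp add: blinfun_apply_Blinfun_T norm_le)
  thus ?thesis using q_less_1 by simp
qed

lemma blinfun_apply_sqrt_series:
  "blinfun_apply (\<Sum>n. sqrt_coeff n *\<^sub>R blinfun_pow (Blinfun T) n) x = sqrt_series T x"
proof -
  have "summable (\<lambda>n. sqrt_coeff n *\<^sub>R blinfun_pow (Blinfun T) n)"
    by (rule summable_norm_cancel[OF summable_norm_blinfun_sqrt_series[OF norm_Blinfun_T]])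
  from bounded_linear.suminf[OF blinfun.bounded_linear_left this, of x]
  show ?thesis
    by (simp add: sqrt_series_def blinfun.scaleR_left blinfun_apply_blinfun_pow blinfun_apply_Blinfun_T)
qed

lemma sqrt_series_square: "sqrt_series T (sqrt_series T x) = x - T x"
  using arg_cong[OF blinfun_sqrt_series_square[OF norm_Blinfun_T], of "\<lambda>B. blinfun_apply B x"]
  by (simp add: blinfun_apply_sqrt_series blinfun.diff_left blinfun_apply_Blinfun_T)

lemma sqrt_series_commute:
  assumes A: "bounded_clinear_op A" and commute: "\<And>x. A (T x) = T (A x)"
  shows "A (sqrt_series T x) = sqrt_series T (A x)"
proof -
  have "A ((T ^^ n) x) = (T ^^ n) (A x)" for n by (induction n) (simp_all add: commute)
  moreover have "A (sqrt_series T x) = (\<Sum>n. A (sqrt_coeff n *\<^sub>R (T ^^ n) x))"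
    by (rule bounded_linear_suminf_sqrt_series[OF bounded_clinear_op_bounded_linear[OF A]])
  ultimately show ?thesis by (simp add: bounded_clinear_op_simps[OF A] sqrt_series_def)
qed

lemma bounded_clinear_op_sqrt_series: "bounded_clinear_op (sqrt_series T)"
proof -
  have "bounded_linear (sqrt_series T)"
    using blinfun.bounded_linear_right[of "\<Sum>n. sqrt_coeff n *\<^sub>R blinfun_pow (Blinfun T) n"]
    by (simp add: blinfun_apply_sqrt_series)
  then obtain K where K: "\<And>x. norm (sqrt_series T x) \<le> norm x * K"
    by (metis bounded_linear.bounded)
  show ?thesis
  proof (rule bounded_clinear_opI[where K=K])
    show "sqrt_series T (x + y) = sqrt_series T x + sqrt_series T y" for x y
      by (rule linear_simps(1)[OF \<open>bounded_linear (sqrt_series T)\<close>])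
    show "sqrt_series T (c *\<^sub>C x) = c *\<^sub>C sqrt_series T x" for c x
      using sqrt_series_commute[OF bounded_clinear_opI[where K="cmod c"], of "\<lambda>x. c *\<^sub>C x" x]
      by (simp add: scaleC_add_right norm_scaleC scaleC_scaleC mult.commute bounded_clinear_op_simps[OF bounded])
    show "norm (sqrt_series T x) \<le> K * norm x" for x using K[of x] by (simp add: mult.commute)
  qed
qed

lemma sqrt_series_coercive:
  assumes symmetric: "\<And>x y. cinner (T x) y = cinner x (T y)"
  shows "Im (cinner (sqrt_series T x) x) = 0"
    and "sqrt (1 - q) * (norm x)\<^sup>2 \<le> Re (cinner (sqrt_series T x) x)"
proof -
  have quadratic_form: "cinner (sqrt_series T x) x = (\<Sum>n. complex_of_real (sqrt_coeff n) * cinner ((T ^^ n) x) x)"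
    by (simp add: bounded_linear_suminf_sqrt_series[OF bounded_linear_cinner_left] scaleC_of_real[symmetric]
        cinner_scaleC_left)
  have summable: "summable (\<lambda>n. complex_of_real (sqrt_coeff n) * cinner ((T ^^ n) x) x)"
    using bounded_linear.summable[OF bounded_linear_cinner_left summable_sqrt_series, of x]
    by (simp add: scaleC_of_real[symmetric] cinner_scaleC_left)
  have real: "Im (cinner ((T ^^ n) x) x) = 0" for n
    by (rule Im_cinner_self_if_symmetric[OF cinner_funpow_symmetric[OF symmetric]])
  show "Im (cinner (sqrt_series T x) x) = 0"
    unfolding quadratic_form Im_suminf[OF summable] by (simp add: real)
  have "sqrt_coeff n * q ^ n * (norm x)\<^sup>2 \<le> sqrt_coeff n * Re (cinner ((T ^^ n) x) x)" for n
  proof (cases "n = 0")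
    case False
    have "Re (cinner ((T ^^ n) x) x) \<le> q ^ n * norm x * norm x"
      using Re_cinner_le[of "(T ^^ n) x" x] mult_right_mono[OF norm_funpow_le[OF norm_le q_nonneg]]
      by (meson norm_ge_zero order_trans)
    thus ?thesis using sqrt_coeff_nonpos[of n] False
      by (simp add: power2_eq_square mult.assoc mult_left_mono_neg)
  qed (simp add: Re_cinner_self)
  hence "(\<Sum>n. sqrt_coeff n * q ^ n * (norm x)\<^sup>2) \<le> (\<Sum>n. Re (complex_of_real (sqrt_coeff n) * cinner ((T ^^ n) x) x))"
    using sums_mult2[OF sums_sqrt_coeff, of q "(norm x)\<^sup>2"] q_nonneg q_less_1
      summable_Re[OF summable]
    by (intro suminf_le) (auto simp: sums_iff)
  thus "sqrt (1 - q) * (norm x)\<^sup>2 \<le> Re (cinner (sqrt_series T x) x)"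
    using sums_unique[OF sums_mult2[OF sums_sqrt_coeff, of q "(norm x)\<^sup>2"]] q_nonneg q_less_1
    by (simp add: quadratic_form Re_suminf[OF summable])
qed

end

lemma positive_sqrt_exists:
  fixes S :: "'h::chilbert_space \<Rightarrow> 'h"
  assumes S: "positive_op S" and coercive: "\<And>x. a * (norm x)\<^sup>2 \<le> Re (cinner (S x) x)" and "a > 0"
  obtains R \<delta> where "positive_op R" "\<And>x. R (R x) = S x" "\<delta> > 0"
    "\<And>x. \<delta> * (norm x)\<^sup>2 \<le> Re (cinner (R x) x)"
    "\<And>A x. bounded_clinear_op A \<Longrightarrow> (\<And>x. A (S x) = S (A x)) \<Longrightarrow> A (R x) = R (A x)"
proof -
  have S_bounded: "bounded_clinear_op S" using S by (simp add: positive_op_def)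
  obtain c q where c: "c > 0" and q: "q \<ge> 0" "q < 1"
    and contraction: "\<And>x. norm (x - (1/c) *\<^sub>R S x) \<le> q * norm x"
    using coercive_shift_contraction[OF S_bounded coercive \<open>a > 0\<close>] by blast
  define T where "T x = x - (1/c) *\<^sub>R S x" for x
  interpret strict_contraction T q
    using bounded_clinear_op_id_minus_scaleR[OF S_bounded] contraction q
    by unfold_locales (simp_all add: T_def[abs_def])
  have T_symmetric: "cinner (T x) y = cinner x (T y)" for x y
    by (simp add: T_def cinner_simps scaleC_of_real[symmetric] positive_op_cinner_sym[OF S])
  define R where "R x = sqrt c *\<^sub>R sqrt_series T x" for x
  define \<delta> where "\<delta> = sqrt c * sqrt (1 - q)"
  have R_bounded: "bounded_clinear_op R"
    unfolding R_def[abs_def] by (rule bounded_clinear_op_scaleR[OF bounded_clinear_op_sqrt_series])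
  have R_cinner: "cinner (R x) x = complex_of_real (sqrt c) * cinner (sqrt_series T x) x" for x
    by (simp add: R_def scaleC_of_real[symmetric] cinner_scaleC_left)
  have R_coercive: "\<delta> * (norm x)\<^sup>2 \<le> Re (cinner (R x) x)" for x
    using mult_left_mono[OF sqrt_series_coercive(2)[OF T_symmetric], of "sqrt c" x] c
    by (simp add: R_cinner \<delta>_def mult.assoc)
  have "\<delta> > 0" unfolding \<delta>_def using c q by simp
  hence "positive_op R"
    using R_bounded R_coercive order_trans[OF _ R_coercive]
    by (auto simp: positive_op_def R_cinner sqrt_series_coercive(1)[OF T_symmetric])
  moreover have "R (R x) = S x" for x
    using c by (simp add: R_def bounded_clinear_op_simps[OF bounded_clinear_op_sqrt_series]
        sqrt_series_square T_def)
  moreover have "A (R x) = R (A x)"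
    if A: "bounded_clinear_op A" and "\<And>x. A (S x) = S (A x)" for A x
    using that by (simp add: R_def T_def bounded_clinear_op_simps[OF A] sqrt_series_commute)
  ultimately show ?thesis using that \<open>\<delta> > 0\<close> R_coercive by blast
qed

text \<open>Uniqueness: a positive square root commutes with the coercive one, and their difference
  \<open>\<psi> = R x - A x\<close> satisfies \<open>(R + A) \<psi> = 0\<close>.\<close>

lemma positive_sqrt_unique:
  assumes R: "positive_op R" "\<And>x. R (R x) = S x" "\<delta> > 0" "\<And>x. \<delta> * (norm x)\<^sup>2 \<le> Re (cinner (R x) x)"
    and R_commute: "\<And>A x. bounded_clinear_op A \<Longrightarrow> (\<And>x. A (S x) = S (A x)) \<Longrightarrow> A (R x) = R (A x)"
    and A: "positive_op A" "\<And>x. A (A x) = S x"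
  shows "A = R"
proof
  fix x
  have R_bounded: "bounded_clinear_op R" and A_bounded: "bounded_clinear_op A"
    using R(1) A(1) by (simp_all add: positive_op_def)
  have AR: "A (R y) = R (A y)" for y by (rule R_commute[OF A_bounded]) (simp add: A(2)[symmetric])
  define \<psi> where "\<psi> = R x - A x"
  have "R \<psi> + A \<psi> = 0"
    by (simp add: \<psi>_def bounded_clinear_op_simps[OF R_bounded] bounded_clinear_op_simps[OF A_bounded]
        R(2) A(2) AR)
  hence "Re (cinner (R \<psi>) \<psi>) + Re (cinner (A \<psi>) \<psi>) = 0"
    by (metis cinner_add_left cinner.zero_left plus_complex.sel(1) zero_complex.sel(1))
  moreover have "Re (cinner (A \<psi>) \<psi>) \<ge> 0" using A(1) by (simp add: positive_op_def)
  ultimately have "\<delta> * (norm \<psi>)\<^sup>2 \<le> 0" using R(4)[of \<psi>] by linarith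
  thus "A x = R x" using R(3) unfolding \<psi>_def by (simp add: mult_le_0_iff)
qed

lemma op_sqrt_coercive:
  fixes S :: "'h::chilbert_space \<Rightarrow> 'h"
  assumes S: "positive_op S" and coercive: "\<And>x. a * (norm x)\<^sup>2 \<le> Re (cinner (S x) x)" and "a > 0"
  shows "op_sqrt S \<in> GL_pos" "op_sqrt S \<circ> op_sqrt S = S"
    and "\<And>A. positive_op A \<Longrightarrow> A \<circ> A = S \<Longrightarrow> A = op_sqrt S"
proof -
  obtain R \<delta> where R: "positive_op R" "\<And>x. R (R x) = S x" "\<delta> > 0"
    "\<And>x. \<delta> * (norm x)\<^sup>2 \<le> Re (cinner (R x) x)"
    "\<And>A x. bounded_clinear_op A \<Longrightarrow> (\<And>x. A (S x) = S (A x)) \<Longrightarrow> A (R x) = R (A x)"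
    using positive_sqrt_exists[OF assms] by blast
  have R_square: "R \<circ> R = S" using R(2) by (simp add: fun_eq_iff)
  have unique: "A = R" if "positive_op A" "A \<circ> A = S" for A
  proof (rule positive_sqrt_unique[OF R that(1)])
    show "A (A x) = S x" for x using that(2) by (simp add: fun_eq_iff)
  qed
  have sqrt: "op_sqrt S = R" unfolding op_sqrt_def
    by (rule the_equality) (use R(1) R_square unique in blast)+
  have "R \<in> GL"
    using R(1) by (intro coercive_imp_GL[OF _ R(4) R(3)]) (simp add: positive_op_def)
  thus "op_sqrt S \<in> GL_pos" "op_sqrt S \<circ> op_sqrt S = S"
    using R(1) R_square by (simp_all add: sqrt GL_pos_def)
  show "\<And>A. positive_op A \<Longrightarrow> A \<circ> A = S \<Longrightarrow> A = op_sqrt S" using unique sqrt by blast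
qed

lemma weakly_measurable_cinner_right:
  assumes "weakly_measurable \<mu> f" shows "(\<lambda>x. cinner (f x) \<psi>) \<in> borel_measurable \<mu>"
  using assms unfolding weakly_measurable_def
  by (subst cinner_commute) (rule borel_measurable_continuous_on[OF linear_continuous_on[OF bounded_linear_cnj]], blast)

lemma weakly_measurable_norm_square:
  assumes "weakly_measurable \<mu> f" shows "(\<lambda>x. (cmod (cinner \<phi> (f x)))\<^sup>2) \<in> borel_measurable \<mu>"
  using assms unfolding weakly_measurable_def
  by (intro borel_measurable_power measurable_compose[OF _ borel_measurable_norm]) blast

lemma weakly_measurable_comp:
  assumes A: "bounded_clinear_op A" and "weakly_measurable \<mu> f"
  shows "weakly_measurable \<mu> (A \<circ> f)"
  using assms(2) by (simp add: weakly_measurable_def cinner_adj_left[OF A])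

definition bessel :: "'x measure \<Rightarrow> ('x \<Rightarrow> 'h::chilbert_space) \<Rightarrow> real \<Rightarrow> bool" where
  "bessel \<mu> f B \<longleftrightarrow> weakly_measurable \<mu> f \<and> B \<ge> 0 \<and>
     (\<forall>\<phi>. (\<integral>\<^sup>+ x. ennreal ((cmod (cinner \<phi> (f x)))\<^sup>2) \<partial>\<mu>) \<le> ennreal (B * (norm \<phi>)\<^sup>2))"

definition frame_form :: "'x measure \<Rightarrow> ('x \<Rightarrow> 'h::chilbert_space) \<Rightarrow> 'h \<Rightarrow> 'h \<Rightarrow> complex" where
  "frame_form \<mu> f \<phi> \<psi> = (LINT x|\<mu>. cinner \<phi> (f x) * cinner (f x) \<psi>)"

context
  fixes \<mu> :: "'x measure" and f :: "'x \<Rightarrow> 'h::chilbert_space" and B :: real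
  assumes bessel: "bessel \<mu> f B"
begin

lemma bessel_weakly_measurable: "weakly_measurable \<mu> f"
  using bessel by (simp add: bessel_def)

lemma bessel_integrable_norm_square: "integrable \<mu> (\<lambda>x. (cmod (cinner \<phi> (f x)))\<^sup>2)"
proof -
  have "(\<integral>\<^sup>+ x. ennreal ((cmod (cinner \<phi> (f x)))\<^sup>2) \<partial>\<mu>) \<le> ennreal (B * (norm \<phi>)\<^sup>2)"
    using bessel by (simp add: bessel_def)
  also have "\<dots> < \<infinity>" by simp
  finally show ?thesis
    using weakly_measurable_norm_square[OF bessel_weakly_measurable]
    by (simp add: integrable_iff_bounded)
qed

lemma bessel_integrable_product: "integrable \<mu> (\<lambda>x. cinner \<phi> (f x) * cinner (f x) \<psi>)"
proof (rule Bochner_Integration.integrable_bound[OF Bochner_Integration.integrable_add[OF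
      bessel_integrable_norm_square[of \<phi>] bessel_integrable_norm_square[of \<psi>]]])
  show "(\<lambda>x. cinner \<phi> (f x) * cinner (f x) \<psi>) \<in> borel_measurable \<mu>"
    using bessel_weakly_measurable weakly_measurable_cinner_right[OF bessel_weakly_measurable]
    unfolding weakly_measurable_def by (intro borel_measurable_times) blast+
  have "cmod (cinner \<phi> (f x) * cinner (f x) \<psi>)
      \<le> (cmod (cinner \<phi> (f x)))\<^sup>2 + (cmod (cinner \<psi> (f x)))\<^sup>2" for x
  proof -
    have "cmod (cinner \<phi> (f x) * cinner (f x) \<psi>) = cmod (cinner \<phi> (f x)) * cmod (cinner \<psi> (f x))"
      by (simp add: norm_mult cinner_commute[of "f x" \<psi>])
    also have "\<dots> \<le> (cmod (cinner \<phi> (f x)))\<^sup>2 + (cmod (cinner \<psi> (f x)))\<^sup>2"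
      using sum_squares_bound[of "cmod (cinner \<phi> (f x))" "cmod (cinner \<psi> (f x))"]
        mult_nonneg_nonneg[OF norm_ge_zero norm_ge_zero, of "cinner \<phi> (f x)" "cinner \<psi> (f x)"]
      by linarith
    finally show ?thesis .
  qed
  thus "AE x in \<mu>. norm (cinner \<phi> (f x) * cinner (f x) \<psi>)
      \<le> norm ((cmod (cinner \<phi> (f x)))\<^sup>2 + (cmod (cinner \<psi> (f x)))\<^sup>2)"
    by simp
qed

lemma frame_form_diagonal:
  "frame_form \<mu> f \<phi> \<phi> = complex_of_real (LINT x|\<mu>. (cmod (cinner \<phi> (f x)))\<^sup>2)"
  "(\<integral>\<^sup>+ x. ennreal ((cmod (cinner \<phi> (f x)))\<^sup>2) \<partial>\<mu>) = ennreal (Re (frame_form \<mu> f \<phi> \<phi>))"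
proof -
  have square: "cinner \<phi> (f x) * cinner (f x) \<phi> = complex_of_real ((cmod (cinner \<phi> (f x)))\<^sup>2)"
    for x by (subst (2) cinner_commute) (rule complex_norm_square[symmetric])
  show diagonal: "frame_form \<mu> f \<phi> \<phi> = complex_of_real (LINT x|\<mu>. (cmod (cinner \<phi> (f x)))\<^sup>2)"
    unfolding frame_form_def square by (rule integral_complex_of_real)
  show "(\<integral>\<^sup>+ x. ennreal ((cmod (cinner \<phi> (f x)))\<^sup>2) \<partial>\<mu>) = ennreal (Re (frame_form \<mu> f \<phi> \<phi>))"
    unfolding diagonal by (simp add: nn_integral_eq_integral[OF bessel_integrable_norm_square])
qed

lemma hermitian_form_frame_form: "hermitian_form (frame_form \<mu> f)"
proof
  fix x y z
  show "frame_form \<mu> f (x + y) z = frame_form \<mu> f x z + frame_form \<mu> f y z"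
    unfolding frame_form_def
    by (simp add: cinner_add_left distrib_right bessel_integrable_product)
  show "frame_form \<mu> f x y = cnj (frame_form \<mu> f y x)"
    unfolding frame_form_def Bochner_Integration.integral_cnj[symmetric]
    by (rule Bochner_Integration.integral_cong) (simp_all, subst (1 2) cinner_commute, simp add: mult.commute)
qed (simp add: frame_form_def cinner_scaleC_left mult.assoc)

interpretation form: hermitian_form "frame_form \<mu> f"
  by (rule hermitian_form_frame_form)

lemma frame_form_diagonal_bounds:
  "Im (frame_form \<mu> f \<phi> \<phi>) = 0" "0 \<le> Re (frame_form \<mu> f \<phi> \<phi>)"
  "Re (frame_form \<mu> f \<phi> \<phi>) \<le> B * (norm \<phi>)\<^sup>2"
proof -
  show "Im (frame_form \<mu> f \<phi> \<phi>) = 0" "0 \<le> Re (frame_form \<mu> f \<phi> \<phi>)"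
    by (simp_all add: frame_form_diagonal(1))
  have "ennreal (Re (frame_form \<mu> f \<phi> \<phi>)) \<le> ennreal (B * (norm \<phi>)\<^sup>2)"
    using bessel unfolding bessel_def frame_form_diagonal(2) by blast
  thus "Re (frame_form \<mu> f \<phi> \<phi>) \<le> B * (norm \<phi>)\<^sup>2"
    using bessel by (simp add: bessel_def ennreal_le_iff)
qed

lemma norm_frame_form_le: "cmod (frame_form \<mu> f \<phi> \<psi>) \<le> B * norm \<phi> * norm \<psi>"
proof -
  have B: "B \<ge> 0" using bessel by (simp add: bessel_def)
  have "(cmod (frame_form \<mu> f \<phi> \<psi>))\<^sup>2 \<le> Re (frame_form \<mu> f \<phi> \<phi>) * Re (frame_form \<mu> f \<psi> \<psi>)"
    by (rule form.Cauchy_Schwarz) (rule frame_form_diagonal_bounds)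
  also have "\<dots> \<le> (B * (norm \<phi>)\<^sup>2) * (B * (norm \<psi>)\<^sup>2)"
    by (intro mult_mono frame_form_diagonal_bounds) (use B in simp)
  also have "\<dots> = (B * norm \<phi> * norm \<psi>)\<^sup>2" by (simp add: power2_eq_square)
  finally show ?thesis using B by (simp add: power2_le_iff_abs_le)
qed

lemma exists_frame_op:
  obtains S where "bounded_clinear_op S" "\<And>\<phi> \<psi>. cinner (S \<phi>) \<psi> = frame_form \<mu> f \<phi> \<psi>"
proof -
  have B: "B \<ge> 0" using bessel by (simp add: bessel_def)
  have "\<exists>w. \<forall>\<psi>. cnj (frame_form \<mu> f \<phi> \<psi>) = cinner \<psi> w" for \<phi>
  proof -
    have "bounded_linear (\<lambda>\<psi>. cnj (frame_form \<mu> f \<phi> \<psi>))"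
      using norm_frame_form_le[of \<phi>]
      by (intro bounded_linear_intro[where K="B * norm \<phi>"])
         (simp_all add: form.add_right form.scaleC_right[of _ "complex_of_real _", unfolded scaleC_of_real]
           mult.commute scaleR_conv_of_real)
    thus ?thesis
      by (rule Riesz_representation[where l="\<lambda>\<psi>. cnj (frame_form \<mu> f \<phi> \<psi>)"])
         (simp_all add: form.scaleC_right, blast)
  qed
  then obtain S where S: "\<And>\<phi> \<psi>. cinner (S \<phi>) \<psi> = frame_form \<mu> f \<phi> \<psi>"
    by (metis cinner_commute complex_cnj_cnj)
  have "bounded_clinear_op S"
  proof (rule bounded_clinear_opI[where K=B])
    show "S (x + y) = S x + S y" for x y by (rule cinner_eqI) (simp add: S cinner_add_left form.add_left)
    show "S (c *\<^sub>C x) = c *\<^sub>C S x" for c x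
      by (rule cinner_eqI) (simp add: S cinner_scaleC_left form.scaleC_left)
    fix x
    have "(norm (S x))\<^sup>2 = Re (frame_form \<mu> f x (S x))" by (simp add: Re_cinner_self[symmetric] S)
    also have "\<dots> \<le> B * norm x * norm (S x)"
      using complex_Re_le_cmod order_trans norm_frame_form_le by blast
    finally have "(norm (S x))\<^sup>2 \<le> B * norm x * norm (S x)" .
    thus "norm (S x) \<le> B * norm x" using B by (intro norm_le_if_norm_square_le) (simp_all add: ac_simps)
  qed
  thus ?thesis using S that by blast
qed

lemma frame_op_char:
  "bounded_clinear_op (frame_op \<mu> f)" "cinner (frame_op \<mu> f \<phi>) \<psi> = frame_form \<mu> f \<phi> \<psi>"
proof -
  obtain S where S: "bounded_clinear_op S" "\<And>\<phi> \<psi>. cinner (S \<phi>) \<psi> = frame_form \<mu> f \<phi> \<psi>"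
    by (rule exists_frame_op) blast
  have "frame_op \<mu> f = S" unfolding frame_op_def frame_form_def[symmetric]
  proof (rule the_equality)
    fix S' assume "bounded_clinear_op S' \<and> (\<forall>\<phi> \<psi>. cinner (S' \<phi>) \<psi> = frame_form \<mu> f \<phi> \<psi>)"
    thus "S' = S" using S by (intro ext cinner_eqI) simp
  qed (use S in simp)
  thus "bounded_clinear_op (frame_op \<mu> f)" "cinner (frame_op \<mu> f \<phi>) \<psi> = frame_form \<mu> f \<phi> \<psi>"
    using S by simp_all
qed

lemma frame_op_eqI:
  "(\<And>\<phi> \<psi>. cinner (S \<phi>) \<psi> = frame_form \<mu> f \<phi> \<psi>) \<Longrightarrow> frame_op \<mu> f = S"
  by (intro ext cinner_eqI) (simp add: frame_op_char)

lemma positive_frame_op: "positive_op (frame_op \<mu> f)"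
  using frame_op_char frame_form_diagonal_bounds by (simp add: positive_op_def)

lemma nn_integral_frame_op:
  "(\<integral>\<^sup>+ x. ennreal ((cmod (cinner \<phi> (f x)))\<^sup>2) \<partial>\<mu>) = ennreal (Re (cinner (frame_op \<mu> f \<phi>) \<phi>))"
  by (simp add: frame_form_diagonal(2) frame_op_char(2))

end

lemma parseval_frame_bessel: "parseval_frame \<mu> g \<Longrightarrow> bessel \<mu> g 1"
  by (simp add: parseval_frame_def bessel_def)

lemma frame_form_parseval:
  assumes g: "parseval_frame \<mu> g" shows "frame_form \<mu> g \<phi> \<psi> = cinner \<phi> \<psi>"
proof -
  note bessel = parseval_frame_bessel[OF g]
  interpret form: hermitian_form "frame_form \<mu> g" by (rule hermitian_form_frame_form[OF bessel])
  have "frame_form \<mu> g \<phi> \<psi> - cinner \<phi> \<psi> = 0"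
  proof (rule sesquilinear_eq_zero_if_diagonal_zero[where D="\<lambda>\<phi> \<psi>. frame_form \<mu> g \<phi> \<psi> - cinner \<phi> \<psi>"])
    fix x
    have "ennreal (Re (frame_form \<mu> g x x)) = ennreal ((norm x)\<^sup>2)"
      using g unfolding parseval_frame_def frame_form_diagonal(2)[OF bessel] by blast
    thus "frame_form \<mu> g x x - cinner x x = 0"
      using frame_form_diagonal_bounds(1,2)[OF bessel, of x]
      by (simp add: cinner_self complex_eq_iff)
  qed (simp_all add: form.add_left form.add_right form.scaleC_left form.scaleC_right cinner_simps
      algebra_simps)
  thus ?thesis by simp
qed

lemma bessel_comp_parseval:
  assumes A: "bounded_clinear_op A" and g: "parseval_frame \<mu> g"
  obtains B where "bessel \<mu> (A \<circ> g) B"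
proof -
  obtain K where K: "K > 0" "\<And>x. norm (adj A x) \<le> K * norm x"
    using bounded_clinear_op_bound[OF bounded_clinear_op_adj[OF A]] by blast
  have "(\<integral>\<^sup>+ x. ennreal ((cmod (cinner \<phi> ((A \<circ> g) x)))\<^sup>2) \<partial>\<mu>) \<le> ennreal (K\<^sup>2 * (norm \<phi>)\<^sup>2)"
    for \<phi>
    using g K(2)[of \<phi>]
    by (simp add: parseval_frame_def cinner_adj_left[OF A] power_mult_distrib[symmetric] power_mono)
  moreover have "weakly_measurable \<mu> (A \<circ> g)"
    using g by (intro weakly_measurable_comp[OF A]) (simp add: parseval_frame_def)
  ultimately have "bessel \<mu> (A \<circ> g) (K\<^sup>2)" by (simp add: bessel_def)
  thus ?thesis by (rule that)
qed

lemma frame_op_comp_parseval: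
  assumes A: "bounded_clinear_op A" and g: "parseval_frame \<mu> g"
  shows "frame_op \<mu> (A \<circ> g) = A \<circ> adj A"
proof -
  obtain B where B: "bessel \<mu> (A \<circ> g) B" by (rule bessel_comp_parseval[OF A g]) blast
  show ?thesis
  proof (rule frame_op_eqI[OF B])
    fix \<phi> \<psi>
    have "cinner ((A \<circ> adj A) \<phi>) \<psi> = frame_form \<mu> g (adj A \<phi>) (adj A \<psi>)"
      by (simp add: cinner_adj_right[OF A] frame_form_parseval[OF g])
    thus "cinner ((A \<circ> adj A) \<phi>) \<psi> = frame_form \<mu> (A \<circ> g) \<phi> \<psi>"
      by (simp add: frame_form_def cinner_adj_right[OF A] cinner_adj_left[OF A])
  qed
qed

lemma norm_le_norm_adj_GL:
  assumes "A \<in> GL" obtains L where "L > 0" "\<And>\<phi>. norm \<phi> \<le> L * norm (adj A \<phi>)"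
proof -
  note A = GL_D[OF assms]
  obtain L where L: "L > 0" "\<And>x. norm (inv A x) \<le> L * norm x" using bounded_clinear_op_bound[OF A(3)] by blast
  have "norm \<phi> \<le> L * norm (adj A \<phi>)" for \<phi>
  proof -
    have "(norm \<phi>)\<^sup>2 = Re (cinner (inv A \<phi>) (adj A \<phi>))"
      by (simp add: cinner_adj_right[OF A(1), symmetric] A(5) Re_cinner_self)
    also have "\<dots> \<le> L * norm \<phi> * norm (adj A \<phi>)"
      using Re_cinner_le[of "inv A \<phi>"] mult_right_mono[OF L(2)] by (meson norm_ge_zero order_trans)
    finally show ?thesis using L(1) by (intro norm_le_if_norm_square_le) auto
  qed
  thus ?thesis using L(1) that by blast
qed

lemma GL_comp_bparseval_frames:
  assumes A: "A \<in> GL" and g: "g \<in> bparseval_frames \<mu>"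
  shows "A \<circ> g \<in> bframes \<mu>"
proof -
  have A_bounded: "bounded_clinear_op A" and g: "parseval_frame \<mu> g" "\<exists>C. \<forall>x. norm (g x) \<le> C"
    using GL_D(1)[OF A] g by (auto simp: bparseval_frames_def)
  obtain B where B: "bessel \<mu> (A \<circ> g) B" by (rule bessel_comp_parseval[OF A_bounded g(1)]) blast
  obtain L where L: "L > 0" "\<And>\<phi>. norm \<phi> \<le> L * norm (adj A \<phi>)" by (rule norm_le_norm_adj_GL[OF A]) blast
  have lower: "ennreal (1 / L\<^sup>2 * (norm \<phi>)\<^sup>2)
      \<le> (\<integral>\<^sup>+ x. ennreal ((cmod (cinner \<phi> ((A \<circ> g) x)))\<^sup>2) \<partial>\<mu>)" for \<phi>
  proof -
    have "(norm \<phi>)\<^sup>2 \<le> L\<^sup>2 * (norm (adj A \<phi>))\<^sup>2"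
      using power_mono[OF L(2)[of \<phi>], of 2] by (simp add: power_mult_distrib)
    thus ?thesis using g(1) L(1)
      by (simp add: parseval_frame_def cinner_adj_left[OF A_bounded] field_simps)
  qed
  have upper: "(\<integral>\<^sup>+ x. ennreal ((cmod (cinner \<phi> ((A \<circ> g) x)))\<^sup>2) \<partial>\<mu>)
      \<le> ennreal (max B (1 / L\<^sup>2) * (norm \<phi>)\<^sup>2)" for \<phi>
    using B unfolding bessel_def
    by (meson ennreal_leI max.cobounded1 mult_right_mono order_trans zero_le_power2)
  have "frame \<mu> (A \<circ> g)"
    unfolding frame_def
    by (rule conjI, use B in \<open>simp add: bessel_def\<close>, rule exI[of _ "1 / L\<^sup>2"],
        rule exI[of _ "max B (1 / L\<^sup>2)"], intro conjI allI lower upper) (use L(1) in simp_all)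
  thus ?thesis
    using bounded_clinear_op_comp_bounded[OF A_bounded g(2)] unfolding bframes_def by blast
qed

lemma bframes_imp_coercive_frame_op:
  assumes "f \<in> bframes \<mu>"
  obtains a B where "bessel \<mu> f B" "a > 0" "\<And>\<phi>. a * (norm \<phi>)\<^sup>2 \<le> Re (cinner (frame_op \<mu> f \<phi>) \<phi>)"
proof -
  from assms obtain a B where measurable: "weakly_measurable \<mu> f" and "0 < a" "a \<le> B"
    and lower: "\<And>\<phi>. ennreal (a * (norm \<phi>)\<^sup>2) \<le> (\<integral>\<^sup>+ x. ennreal ((cmod (cinner \<phi> (f x)))\<^sup>2) \<partial>\<mu>)"
    and upper: "\<And>\<phi>. (\<integral>\<^sup>+ x. ennreal ((cmod (cinner \<phi> (f x)))\<^sup>2) \<partial>\<mu>) \<le> ennreal (B * (norm \<phi>)\<^sup>2)"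
    unfolding bframes_def frame_def by blast
  have bessel: "bessel \<mu> f B" unfolding bessel_def using measurable \<open>0 < a\<close> \<open>a \<le> B\<close> upper by simp
  have "a * (norm \<phi>)\<^sup>2 \<le> Re (cinner (frame_op \<mu> f \<phi>) \<phi>)" for \<phi>
    using lower[of \<phi>] frame_form_diagonal_bounds(2)[OF bessel, of \<phi>]
    by (simp add: nn_integral_frame_op[OF bessel] frame_op_char(2)[OF bessel])
  with bessel \<open>0 < a\<close> show ?thesis by (rule that)
qed

lemma parseval_frame_inv_sqrt_comp:
  assumes bessel: "bessel \<mu> f B" and R: "R \<in> GL_pos" "R \<circ> R = frame_op \<mu> f"
  shows "parseval_frame \<mu> (inv R \<circ> f)"
proof -
  have R_pos: "positive_op R" and R_inv: "\<And>y. R (inv R y) = y" "\<And>y. inv R (R y) = y"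
    and "bounded_clinear_op (inv R)"
    using R(1) GL_D unfolding GL_pos_def by auto
  have inv_R_symmetric: "cinner \<phi> (inv R \<psi>) = cinner (inv R \<phi>) \<psi>" for \<phi> \<psi>
    using positive_op_cinner_sym[OF R_pos, of "inv R \<phi>" "inv R \<psi>"] by (simp add: R_inv)
  have "(\<integral>\<^sup>+ x. ennreal ((cmod (cinner \<phi> ((inv R \<circ> f) x)))\<^sup>2) \<partial>\<mu>) = ennreal ((norm \<phi>)\<^sup>2)" for \<phi>
  proof -
    have "frame_op \<mu> f (inv R \<phi>) = R \<phi>" using fun_cong[OF R(2), of "inv R \<phi>"] by (simp add: R_inv)
    thus ?thesis
      by (simp add: inv_R_symmetric nn_integral_frame_op[OF bessel] positive_op_cinner_sym[OF R_pos]
          R_inv Re_cinner_self)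
  qed
  moreover have "weakly_measurable \<mu> (inv R \<circ> f)"
    by (rule weakly_measurable_comp[OF \<open>bounded_clinear_op (inv R)\<close> bessel_weakly_measurable[OF bessel]])
  ultimately show ?thesis by (simp add: parseval_frame_def)
qed

lemma bframes_frame_T:
  fixes f :: "'x \<Rightarrow> 'h::chilbert_space"
  assumes f: "f \<in> bframes \<mu>"
  shows "op_sqrt (frame_op \<mu> f) \<in> GL_pos"
    and "\<And>A. positive_op A \<Longrightarrow> A \<circ> A = frame_op \<mu> f \<Longrightarrow> A = op_sqrt (frame_op \<mu> f)"
    and "frame_T \<mu> f \<in> bparseval_frames \<mu>"
    and "f = op_sqrt (frame_op \<mu> f) \<circ> frame_T \<mu> f"
proof -
  obtain a B where bessel: "bessel \<mu> f B" and "a > 0"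
    and coercive: "\<And>\<phi>. a * (norm \<phi>)\<^sup>2 \<le> Re (cinner (frame_op \<mu> f \<phi>) \<phi>)"
    by (rule bframes_imp_coercive_frame_op[OF f]) blast
  note sqrt = op_sqrt_coercive[OF positive_frame_op[OF bessel] coercive \<open>a > 0\<close>]
  show "op_sqrt (frame_op \<mu> f) \<in> GL_pos"
    and "\<And>A. positive_op A \<Longrightarrow> A \<circ> A = frame_op \<mu> f \<Longrightarrow> A = op_sqrt (frame_op \<mu> f)"
    using sqrt by blast+
  have T: "frame_T \<mu> f = inv (op_sqrt (frame_op \<mu> f)) \<circ> f"
    unfolding frame_T_def op_inv_sqrt_def by (simp add: comp_def)
  have "bounded_clinear_op (inv (op_sqrt (frame_op \<mu> f)))" using sqrt(1) GL_D(3) GL_pos_def by blast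
  thus "frame_T \<mu> f \<in> bparseval_frames \<mu>"
    using parseval_frame_inv_sqrt_comp[OF bessel sqrt(1,2)] bounded_clinear_op_comp_bounded f
    unfolding T bparseval_frames_def bframes_def by blast
  have "op_sqrt (frame_op \<mu> f) \<in> GL" using sqrt(1) by (simp add: GL_pos_def)
  thus "f = op_sqrt (frame_op \<mu> f) \<circ> frame_T \<mu> f" by (simp add: T fun_eq_iff GL_D(5))
qed

lemma unitary_comp_bparseval_frames:
  assumes V: "V \<in> unitary_group" and g: "g \<in> bparseval_frames \<mu>"
  shows "V \<circ> g \<in> bparseval_frames \<mu>"
proof -
  have norm_inv: "norm (inv V \<phi>) = norm \<phi>" for \<phi>
  proof -
    have "V (inv V \<phi>) = \<phi>" using GL_D(5) unitary_group_subset_GL V by blast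
    thus ?thesis using unitary_groupD(4)[OF V, of "inv V \<phi>"] by simp
  qed
  have "weakly_measurable \<mu> (V \<circ> g)"
    using g by (intro weakly_measurable_comp[OF unitary_groupD(1)[OF V]]) (simp add: bparseval_frames_def
      parseval_frame_def)
  thus ?thesis
    using g by (simp add: bparseval_frames_def parseval_frame_def cinner_unitary_right[OF V] norm_inv
        unitary_groupD(4)[OF V])
qed

text \<open>If \<open>V g = W g\<close> then \<open>V\<^sup>-\<^sup>1 \<phi> - W\<^sup>-\<^sup>1 \<phi>\<close> is orthogonal to every \<open>g x\<close>, so it vanishes
  by the Parseval identity.\<close>

lemma unitary_eq_if_eq_on_parseval_frame:
  assumes V: "V \<in> unitary_group" and W: "W \<in> unitary_group" and g: "parseval_frame \<mu> g"
    and eq: "V \<circ> g = W \<circ> g"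
  shows "V = W"
proof -
  have "inv V \<phi> = inv W \<phi>" for \<phi>
  proof -
    define d where "d = inv V \<phi> - inv W \<phi>"
    have "cinner d (g x) = 0" for x
      using fun_cong[OF eq, of x]
      by (simp add: d_def cinner.diff_left cinner_unitary_right[OF V, symmetric]
          cinner_unitary_right[OF W, symmetric])
    hence "(\<integral>\<^sup>+ x. ennreal ((cmod (cinner d (g x)))\<^sup>2) \<partial>\<mu>) = 0" by simp
    moreover have "(\<integral>\<^sup>+ x. ennreal ((cmod (cinner d (g x)))\<^sup>2) \<partial>\<mu>) = ennreal ((norm d)\<^sup>2)"
      using g by (simp add: parseval_frame_def)
    ultimately show ?thesis unfolding d_def by simp
  qed
  hence "inv V = inv W" ..
  moreover have "bij V" "bij W" using GL_D(2) unitary_group_subset_GL V W by blast+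
  ultimately show ?thesis by (metis inv_inv_eq)
qed

lemma transversal_factorization:
  assumes tr: "transversal \<mu> Fb" and h: "h \<in> bparseval_frames \<mu>"
  shows "sigma_tr Fb h \<in> Fb" "U_tr Fb h \<in> unitary_group" "h = U_tr Fb h \<circ> sigma_tr Fb h"
    and "\<And>V g. V \<in> unitary_group \<Longrightarrow> g \<in> Fb \<Longrightarrow> h = V \<circ> g \<Longrightarrow> sigma_tr Fb h = g \<and> U_tr Fb h = V"
proof -
  have Fb: "Fb \<subseteq> bparseval_frames \<mu>" and unique: "\<exists>!g. g \<in> Fb \<and> (\<exists>V \<in> unitary_group. h = V \<circ> g)"
    using tr h unfolding transversal_def by auto
  have sigma: "sigma_tr Fb h \<in> Fb \<and> (\<exists>V \<in> unitary_group. h = V \<circ> sigma_tr Fb h)"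
    unfolding sigma_tr_def by (rule theI'[OF unique])
  then obtain V0 where V0: "V0 \<in> unitary_group" "h = V0 \<circ> sigma_tr Fb h" by blast
  have parseval: "parseval_frame \<mu> (sigma_tr Fb h)"
    using sigma Fb by (auto simp: bparseval_frames_def)
  have eq_V0: "V = V0" if "V \<in> unitary_group" "h = V \<circ> sigma_tr Fb h" for V
    by (rule unitary_eq_if_eq_on_parseval_frame[OF that(1) V0(1) parseval]) (use that V0 in simp)
  have U: "U_tr Fb h = V0" unfolding U_tr_def
    by (rule the_equality) (use V0 eq_V0 in blast)+
  show "sigma_tr Fb h \<in> Fb" "U_tr Fb h \<in> unitary_group" "h = U_tr Fb h \<circ> sigma_tr Fb h"
    using sigma V0 U by simp_all
  fix V g assume V: "V \<in> unitary_group" and "g \<in> Fb" "h = V \<circ> g"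
  hence "sigma_tr Fb h = g" unfolding sigma_tr_def by (intro the1_equality[OF unique]) blast
  thus "sigma_tr Fb h = g \<and> U_tr Fb h = V" using eq_V0[OF V] \<open>h = V \<circ> g\<close> U by simp
qed

lemma bframes_factorization:
  assumes tr: "transversal \<mu> Fb" and f: "f \<in> bframes \<mu>"
  shows "f = op_sqrt (frame_op \<mu> f) \<circ> U_tr Fb (frame_T \<mu> f) \<circ> sigma_tr Fb (frame_T \<mu> f)"
  using bframes_frame_T(4)[OF f] transversal_factorization(3)[OF tr bframes_frame_T(3)[OF f]]
  by (metis comp_assoc)

lemma bframes_factorization_unique:
  assumes tr: "transversal \<mu> Fb"
    and A: "A \<in> GL_pos" and V: "V \<in> unitary_group" and g: "g \<in> Fb" and f: "f = A \<circ> V \<circ> g"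
  shows "A = op_sqrt (frame_op \<mu> f) \<and> V = U_tr Fb (frame_T \<mu> f) \<and> g = sigma_tr Fb (frame_T \<mu> f)"
proof -
  have Vg: "V \<circ> g \<in> bparseval_frames \<mu>"
    using unitary_comp_bparseval_frames[OF V] g tr by (auto simp: transversal_def)
  have A_GL: "A \<in> GL" and A_pos: "positive_op A" using A by (auto simp: GL_pos_def)
  have f': "f = A \<circ> (V \<circ> g)" using f by (simp add: comp_assoc)
  have bframe: "f \<in> bframes \<mu>" unfolding f' by (rule GL_comp_bparseval_frames[OF A_GL Vg])
  have "parseval_frame \<mu> (V \<circ> g)" using Vg by (simp add: bparseval_frames_def)
  hence "frame_op \<mu> f = A \<circ> A"
    unfolding f' using frame_op_comp_parseval[OF GL_D(1)[OF A_GL]] adj_positive_op[OF A_pos] by metis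
  hence sqrt: "A = op_sqrt (frame_op \<mu> f)" using bframes_frame_T(2)[OF bframe A_pos] by simp
  have "frame_T \<mu> f = (\<lambda>x. inv A (f x))" unfolding frame_T_def op_inv_sqrt_def sqrt[symmetric] ..
  also have "\<dots> = V \<circ> g" using GL_D(4)[OF A_GL] by (simp add: f' comp_def)
  finally have "frame_T \<mu> f = V \<circ> g" .
  thus ?thesis
    using transversal_factorization(4)[OF tr bframes_frame_T(3)[OF bframe] V g] sqrt by simp
qed

lemma bframes_eq_GL_pos_comp_bparseval_frames:
  "bframes \<mu> = {A \<circ> g | A g. A \<in> GL_pos \<and> g \<in> bparseval_frames \<mu>}"
  using bframes_frame_T(1,3,4) GL_comp_bparseval_frames GL_pos_subset_GL by blast

lemma bframes_eq_GL_comp_transversal: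
  fixes Fb :: "('x \<Rightarrow> 'h::chilbert_space) set"
  assumes tr: "transversal \<mu> Fb" shows "bframes \<mu> = {A \<circ> g | A g. A \<in> GL \<and> g \<in> Fb}"
proof (intro set_eqI iffI)
  fix f :: "'x \<Rightarrow> 'h" assume f: "f \<in> bframes \<mu>"
  note T = bframes_frame_T(3)[OF f]
  have "op_sqrt (frame_op \<mu> f) \<circ> U_tr Fb (frame_T \<mu> f) \<in> GL"
    using bframes_frame_T(1)[OF f] transversal_factorization(2)[OF tr T] GL_pos_subset_GL
      unitary_group_subset_GL by (blast intro: GL_comp)
  thus "f \<in> {A \<circ> g | A g. A \<in> GL \<and> g \<in> Fb}"
    using bframes_factorization[OF tr f] transversal_factorization(1)[OF tr T] by blast
qed (use tr GL_comp_bparseval_frames in \<open>auto simp: transversal_def\<close>)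

lemma bframes_eq_GL_pos_unitary_comp_transversal:
  fixes Fb :: "('x \<Rightarrow> 'h::chilbert_space) set"
  assumes tr: "transversal \<mu> Fb"
  shows "bframes \<mu> = {A \<circ> V \<circ> g | A V g. A \<in> GL_pos \<and> V \<in> unitary_group \<and> g \<in> Fb}"
proof (intro set_eqI iffI)
  fix f :: "'x \<Rightarrow> 'h" assume f: "f \<in> bframes \<mu>"
  show "f \<in> {A \<circ> V \<circ> g | A V g. A \<in> GL_pos \<and> V \<in> unitary_group \<and> g \<in> Fb}"
    using bframes_factorization[OF tr f] bframes_frame_T(1)[OF f]
      transversal_factorization(1,2)[OF tr bframes_frame_T(3)[OF f]] by blast
next
  fix f :: "'x \<Rightarrow> 'h" assume "f \<in> {A \<circ> V \<circ> g | A V g. A \<in> GL_pos \<and> V \<in> unitary_group \<and> g \<in> Fb}"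
  then obtain A V g where "A \<in> GL_pos" "V \<in> unitary_group" "g \<in> Fb" "f = A \<circ> V \<circ> g" by blast
  moreover have "A \<circ> V \<in> GL"
    using calculation GL_comp GL_pos_subset_GL unitary_group_subset_GL by blast
  ultimately show "f \<in> bframes \<mu>"
    using GL_comp_bparseval_frames tr by (auto simp: transversal_def)
qed

theorem mainTheorem19:
  fixes \<mu> :: "'x::topological_space measure"
    and Fb :: "('x \<Rightarrow> 'h::{chilbert_space, second_countable_topology}) set"
  assumes "locally_compact_space (euclidean :: 'x topology)"
    and "sets \<mu> = sets borel"
    and "transversal \<mu> Fb"
  shows "(bframes \<mu> :: ('x \<Rightarrow> 'h) set) = {A \<circ> V \<circ> g | A V g. A \<in> GL_pos \<and> V \<in> unitary_group \<and> g \<in> Fb}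
       \<and> (bframes \<mu> :: ('x \<Rightarrow> 'h) set) = {A \<circ> g | A g. A \<in> GL \<and> g \<in> Fb}
       \<and> (bframes \<mu> :: ('x \<Rightarrow> 'h) set) = {A \<circ> g | A g. A \<in> GL_pos \<and> g \<in> bparseval_frames \<mu>}
       \<and> (\<forall>f \<in> (bframes \<mu> :: ('x \<Rightarrow> 'h) set).
            frame_T \<mu> f \<in> bparseval_frames \<mu>
          \<and> op_sqrt (frame_op \<mu> f) \<in> GL_pos
          \<and> f = op_sqrt (frame_op \<mu> f) \<circ> U_tr Fb (frame_T \<mu> f) \<circ> sigma_tr Fb (frame_T \<mu> f)
          \<and> (\<forall>A V g. A \<in> GL_pos \<and> V \<in> unitary_group \<and> g \<in> Fb \<and> f = A \<circ> V \<circ> g \<longrightarrow>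
               A = op_sqrt (frame_op \<mu> f) \<and> V = U_tr Fb (frame_T \<mu> f) \<and> g = sigma_tr Fb (frame_T \<mu> f)))"
proof (intro conjI ballI allI impI)
  note tr = \<open>transversal \<mu> Fb\<close>
  show "bframes \<mu> = {A \<circ> V \<circ> g | A V g. A \<in> GL_pos \<and> V \<in> unitary_group \<and> g \<in> Fb}"
    by (rule bframes_eq_GL_pos_unitary_comp_transversal[OF tr])
  show "bframes \<mu> = {A \<circ> g | A g. A \<in> GL \<and> g \<in> Fb}"
    by (rule bframes_eq_GL_comp_transversal[OF tr])
  show "bframes \<mu> = {A \<circ> g | A g. A \<in> GL_pos \<and> g \<in> bparseval_frames \<mu>}"
    by (rule bframes_eq_GL_pos_comp_bparseval_frames)
  fix f :: "'x \<Rightarrow> 'h" assume f: "f \<in> bframes \<mu>"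
  show "frame_T \<mu> f \<in> bparseval_frames \<mu>" "op_sqrt (frame_op \<mu> f) \<in> GL_pos"
    by (rule bframes_frame_T(3)[OF f], rule bframes_frame_T(1)[OF f])
  show "f = op_sqrt (frame_op \<mu> f) \<circ> U_tr Fb (frame_T \<mu> f) \<circ> sigma_tr Fb (frame_T \<mu> f)"
    by (rule bframes_factorization[OF tr f])
  fix A V g assume "A \<in> GL_pos \<and> V \<in> unitary_group \<and> g \<in> Fb \<and> f = A \<circ> V \<circ> g"
  thus "A = op_sqrt (frame_op \<mu> f)" "V = U_tr Fb (frame_T \<mu> f)" "g = sigma_tr Fb (frame_T \<mu> f)"
    using bframes_factorization_unique[OF tr] by blast+
qed

end
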